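(* Let $0<|p|<1$, let $m_1,\dots,m_r\in\mathbb Z_{\ge0}$ and $n=m_1+\dots+m_r$, and let $a,b,c_1,\dots,c_r,q\in\mathbb C^\ast$. Then, whenever no denominator vanishes, $$\sum_{j=0}^n\frac{\theta(aq^{2j};p)}{\theta(a;p)}\frac{(a,b,a/b,q^{-n};q,p)_j}{(q,aq/b,bq,aq^{n+1};q,p)_j}\,q^j\prod_{l=1}^r\frac{(c_lq^{m_l},aq/c_l;q,p)_j}{(c_l,aq^{1-m_l}/c_l;q,p)_j}=\frac{(q,aq;q,p)_n}{(aq/b,bq;q,p)_n}\prod_{l=1}^r\frac{(c_l/b,bc_l/a;q,p)_{m_l}}{(c_l,c_l/a;q,p)_{m_l}}.$$
   Context: $\theta(x;p)=\prod_{k=0}^\infty(1-xp^k)(1-p^{k+1}/x)$ for $x\neq0$. Elliptic shifted factorial: $(a;q,p)_k=\prod_{j=0}^{k-1}\theta(aq^j;p)$ for $k\in\mathbb Z_{\ge0}$, and $(a_1,\dots,a_m;q,p)_k=(a_1;q,p)_k\cdots(a_m;q,p)_k$. *)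

theory Defs
  imports "HOL-Analysis.Analysis"
begin

definition theta :: "complex \<Rightarrow> complex \<Rightarrow> complex" where
  "theta x p = (\<Prod>k. (1 - x * p ^ k) * (1 - p ^ (k + 1) / x))"

definition ell_fac :: "complex \<Rightarrow> complex \<Rightarrow> complex \<Rightarrow> nat \<Rightarrow> complex" where
  "ell_fac a q p k = (\<Prod>j<k. theta (a * q ^ j) p)"

end

theory Submission
  imports Defs "HOL-Complex_Analysis.Complex_Analysis"
begin

text \<open>
  The functions \<open>z \<mapsto> \<theta>(ez;p)\<theta>(az/e;p)\<close> form a two-dimensional space
  (Liouville applied to quotients of such products, which are \<open>p\<close>-periodic in \<open>z\<close>), which
  yields the three-term addition formula for \<open>\<theta>\<close>. Induction on the number of factors turns
  it into an elliptic partial fraction identity: for points \<open>z\<^sub>k\<close>, \<open>k \<in> S\<close>, and \<open>e\<^sub>i\<close>,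
  \<open>i \<in> E\<close>, with \<open>|S| = |E| + 2\<close>,
  \<open>\<Sum>\<^sub>k z\<^sub>k \<Prod>\<^sub>i \<theta>(e\<^sub>iz\<^sub>k)\<theta>(az\<^sub>k/e\<^sub>i) / \<Prod>\<^sub>j\<^sub>\<noteq>\<^sub>k \<theta>(z\<^sub>k/z\<^sub>j)\<theta>(az\<^sub>kz\<^sub>j) = 0\<close>.
  Taking the nodes \<open>q\<^sup>0, \<dots>, q\<^sup>n, b/a\<close> and the \<open>n\<close> points \<open>c\<^sub>lq\<^sup>i\<close> (\<open>i < m\<^sub>l\<close>), the first
  \<open>n + 1\<close> terms become the summands and the last one the closed form. The resulting
  identity holds under extra non-vanishing conditions; these are removed by moving
  \<open>(a, b)\<close> to \<open>(a(1+t), b/(1+t))\<close> and letting \<open>t \<rightarrow> 0\<close>.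
\<close>

section \<open>The theta function\<close>

definition qpoch_inf :: "complex \<Rightarrow> complex \<Rightarrow> complex" where
  "qpoch_inf p y = (\<Prod>k. 1 - y * p ^ k)"

locale theta_nome =
  fixes p :: complex
  assumes norm_nome_pos: "0 < norm p" and norm_nome_less_1: "norm p < 1"
begin

lemma nome_nonzero [simp]: "p \<noteq> 0"
  using norm_nome_pos by auto

lemma summable_norm_nome_power: "summable (\<lambda>k. C * norm p ^ k)"
  by (intro summable_mult summable_geometric) (use norm_nome_pos norm_nome_less_1 in auto)

lemma convergent_prod_qpoch: "convergent_prod (\<lambda>k. 1 - y * p ^ k)"
proof -
  have "summable (\<lambda>k. norm ((1 - y * p ^ k) - 1))"
    using summable_norm_nome_power[of "norm y"] by (simp add: norm_mult norm_power)
  then show ?thesis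
    by (intro abs_convergent_prod_imp_convergent_prod summable_imp_abs_convergent_prod)
qed

lemma theta_eq_qpoch_inf: "theta x p = qpoch_inf p x * qpoch_inf p (p / x)"
proof -
  have "qpoch_inf p x * qpoch_inf p (p / x) = (\<Prod>k. (1 - x * p ^ k) * (1 - (p/x) * p ^ k))"
    unfolding qpoch_inf_def by (rule prodinf_mult) (rule convergent_prod_qpoch)+
  also have "\<dots> = theta x p" unfolding theta_def
    by (rule prodinf_cong) (auto simp: field_simps)
  finally show ?thesis by simp
qed

lemma qpoch_inf_eq_0_iff: "qpoch_inf p y = 0 \<longleftrightarrow> (\<exists>k. y * p ^ k = 1)"
proof -
  have "(\<lambda>k. 1 - y * p ^ k) has_prod qpoch_inf p y"
    unfolding qpoch_inf_def using convergent_prod_qpoch convergent_prod_has_prod by blast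
  from has_prod_eq_0_iff[OF this] show ?thesis
    by (auto simp: image_iff eq_commute[of 0] eq_commute[of 1] right_minus_eq)
qed

lemma qpoch_inf_split_head: "qpoch_inf p y = (1 - y) * qpoch_inf p (p * y)"
proof (cases "y = 1")
  case True
  then show ?thesis using qpoch_inf_eq_0_iff[of 1] by (metis mult_1 mult_zero_left power_0 right_minus_eq)
next
  case False
  have "(\<Prod>n. 1 - y * p ^ Suc n) = qpoch_inf p y / (1 - y * p ^ 0)"
    unfolding qpoch_inf_def by (rule prodinf_split_head) (use convergent_prod_qpoch False in auto)
  moreover have "(\<Prod>n. 1 - y * p ^ Suc n) = qpoch_inf p (p * y)"
    unfolding qpoch_inf_def by (rule prodinf_cong) (auto simp: field_simps)
  ultimately show ?thesis using False by (auto simp: field_simps)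
qed

lemma qpoch_inf_nome_nonzero: "qpoch_inf p p \<noteq> 0"
proof
  assume "qpoch_inf p p = 0"
  then obtain k where "p * p ^ k = 1" using qpoch_inf_eq_0_iff by auto
  then have "norm p ^ Suc k = 1" by (metis norm_one norm_power power_Suc)
  moreover have "norm p ^ Suc k < 1"
    using power_Suc_less_one[of "norm p" k] norm_nome_pos norm_nome_less_1 by simp
  ultimately show False by simp
qed

lemma theta_eq_0_iff:
  assumes "x \<noteq> 0"
  shows "theta x p = 0 \<longleftrightarrow> (\<exists>j::int. x = p powi j)"
proof
  assume "theta x p = 0"
  then have "qpoch_inf p x = 0 \<or> qpoch_inf p (p/x) = 0" by (simp add: theta_eq_qpoch_inf)
  then show "\<exists>j::int. x = p powi j"
  proof
    assume "qpoch_inf p x = 0"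
    then obtain k where "x * p ^ k = 1" using qpoch_inf_eq_0_iff by auto
    then have "x = p powi (- int k)"
      by (auto simp: power_int_minus field_simps)
    then show ?thesis by blast
  next
    assume "qpoch_inf p (p/x) = 0"
    then obtain k where "p / x * p ^ k = 1" using qpoch_inf_eq_0_iff by auto
    then have "x = p ^ Suc k"
      using assms by (auto simp: field_simps)
    then have "x = p powi (int (Suc k))"
      by (metis power_int_of_nat)
    then show ?thesis by blast
  qed
next
  assume "\<exists>j::int. x = p powi j"
  then obtain j :: int where j: "x = p powi j" by blast
  show "theta x p = 0"
  proof (cases "j \<le> 0")
    case True
    then have "x * p ^ nat (- j) = 1" using j
      by (auto simp: power_int_def field_simps)
    then show ?thesis by (auto simp: theta_eq_qpoch_inf qpoch_inf_eq_0_iff)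
  next
    case False
    then have "p / x * p ^ nat (j - 1) = 1" using j
      by (auto simp: power_int_def field_simps power_Suc[symmetric] Suc_nat_eq_nat_zadd1)
    then show ?thesis by (auto simp: theta_eq_qpoch_inf qpoch_inf_eq_0_iff)
  qed
qed

lemma theta_power_int_nome: "theta (p powi j) p = 0"
  by (subst theta_eq_0_iff) auto

lemma theta_1: "theta 1 p = 0"
  using theta_power_int_nome[of 0] by simp

lemma qpoch_inf_functional_eq:
  "x \<noteq> 0 \<Longrightarrow> qpoch_inf p (p * x) * qpoch_inf p (1 / x) * x = - (qpoch_inf p x * qpoch_inf p (p / x))"
proof -
  assume x: "x \<noteq> 0"
  have 1: "qpoch_inf p (1/x) = (1 - 1/x) * qpoch_inf p (p/x)"
    using qpoch_inf_split_head[of "1/x"] by simp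
  have 2: "qpoch_inf p x = (1 - x) * qpoch_inf p (p*x)"
    using qpoch_inf_split_head[of x] by simp
  show ?thesis unfolding 1 2 using x by (simp add: field_simps)
qed

lemma theta_nome_mult: "x \<noteq> 0 \<Longrightarrow> theta (p * x) p * x = - theta x p"
  using qpoch_inf_functional_eq[of x] by (simp add: theta_eq_qpoch_inf)

lemma theta_inverse: "x \<noteq> 0 \<Longrightarrow> theta (1 / x) p = - theta x p / x"
  using qpoch_inf_functional_eq[of x] by (simp add: theta_eq_qpoch_inf field_simps)

lemma theta_inverse_div: "x \<noteq> 0 \<Longrightarrow> y \<noteq> 0 \<Longrightarrow> theta (y / x) p = - theta (x / y) p * (y / x)"
  using theta_inverse[of "x / y"] by (simp add: field_simps)

lemma uniform_limit_qpoch_inf: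
  assumes "R > 0"
  shows "uniform_limit (cball 0 R) (\<lambda>N y. \<Prod>k<N. 1 - y * p ^ k) (qpoch_inf p) sequentially"
proof -
  have "uniformly_convergent_on (cball 0 R) (\<lambda>N y. \<Prod>k<N. 1 - y * p ^ k)"
  proof (rule uniformly_convergent_on_prod')
    show "uniformly_convergent_on (cball 0 R) (\<lambda>N y. \<Sum>k<N. norm (1 - y * p ^ k - 1))"
    proof (rule Weierstrass_m_test')
      fix k and y :: complex assume "y \<in> cball 0 R"
      then show "norm (norm (1 - y * p ^ k - 1)) \<le> R * norm p ^ k"
        by (simp add: norm_mult norm_power mult_right_mono)
    qed (rule summable_norm_nome_power)
  qed (auto intro!: continuous_intros)
  then obtain g where g: "uniform_limit (cball 0 R) (\<lambda>N y. \<Prod>k<N. 1 - y * p ^ k) g sequentially"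
    by (auto simp: uniformly_convergent_on_def)
  have "g z = qpoch_inf p z" if z: "z \<in> cball 0 R" for z
  proof -
    have "(\<lambda>n. \<Prod>k<Suc n. 1 - z * p ^ k) \<longlonglongrightarrow> g z"
      using tendsto_uniform_limitI[OF g z] by (rule LIMSEQ_Suc)
    moreover have "(\<lambda>n. \<Prod>k<Suc n. 1 - z * p ^ k) \<longlonglongrightarrow> qpoch_inf p z"
      using convergent_prod_LIMSEQ[OF convergent_prod_qpoch[of z]]
      unfolding lessThan_Suc_atMost qpoch_inf_def .
    ultimately show ?thesis by (rule LIMSEQ_unique)
  qed
  with g show ?thesis
    using uniform_limit_cong'[of "cball 0 R" "(\<lambda>N y. \<Prod>k<N. 1 - y * p ^ k)"
        "(\<lambda>N y. \<Prod>k<N. 1 - y * p ^ k)" g "qpoch_inf p" sequentially]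
    by blast
qed

lemma holomorphic_qpoch_inf: "qpoch_inf p holomorphic_on A"
proof (rule holomorphic_on_subset)
  show "qpoch_inf p holomorphic_on UNIV"
  proof (rule holomorphic_uniform_sequence[where f = "\<lambda>N y. \<Prod>k<N. 1 - y * p ^ k"])
    fix z :: complex
    have "uniform_limit (cball 0 (norm z + 1)) (\<lambda>N y. \<Prod>k<N. 1 - y * p ^ k) (qpoch_inf p) sequentially"
      by (rule uniform_limit_qpoch_inf) (auto intro: add_nonneg_pos)
    then have "uniform_limit (cball z 1) (\<lambda>N y. \<Prod>k<N. 1 - y * p ^ k) (qpoch_inf p) sequentially"
      by (rule uniform_limit_on_subset) (simp add: cball_subset_cball_iff)
    then show "\<exists>d>0. cball z d \<subseteq> UNIV \<and>
        uniform_limit (cball z d) (\<lambda>N y. \<Prod>k<N. 1 - y * p ^ k) (qpoch_inf p) sequentially"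
      by (intro exI[of _ 1]) auto
  qed (auto intro!: holomorphic_on_prod holomorphic_intros)
qed auto

lemma holomorphic_qpoch_inf_compose:
  "f holomorphic_on A \<Longrightarrow> (\<lambda>x. qpoch_inf p (f x)) holomorphic_on A"
  using holomorphic_on_compose[of f A "qpoch_inf p", OF _ holomorphic_qpoch_inf]
    by (simp add: o_def)

lemma holomorphic_theta: "(\<lambda>x. theta x p) holomorphic_on (- {0})"
proof -
  have "(\<lambda>x. qpoch_inf p x * qpoch_inf p (p / x)) holomorphic_on (- {0})"
    by (intro holomorphic_on_mult holomorphic_qpoch_inf holomorphic_qpoch_inf_compose
        holomorphic_intros) auto
  then show ?thesis
    by (rule holomorphic_transform) (auto simp: theta_eq_qpoch_inf)
qed

lemma holomorphic_theta_scaled: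
  assumes "c \<noteq> 0"
  shows "(\<lambda>z. theta (c * z) p) holomorphic_on (- {0})"
proof -
  have "(\<lambda>x. theta x p) holomorphic_on ((\<lambda>z. c * z) ` (- {0}))"
    by (rule holomorphic_on_subset[OF holomorphic_theta]) (use assms in auto)
  from holomorphic_on_compose[OF _ this] show ?thesis
    by (simp add: o_def holomorphic_intros)
qed

lemma isCont_theta: "x \<noteq> 0 \<Longrightarrow> isCont (\<lambda>x. theta x p) x"
  using holomorphic_on_imp_continuous_on[OF holomorphic_theta]
  by (simp add: continuous_on_eq_continuous_at open_Compl)

lemma tendsto_theta [tendsto_intros]:
  "(f \<longlongrightarrow> x) F \<Longrightarrow> x \<noteq> 0 \<Longrightarrow> ((\<lambda>t. theta (f t) p) \<longlongrightarrow> theta x p) F"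
  using isCont_tendsto_compose[OF isCont_theta] by blast

definition theta' :: "complex \<Rightarrow> complex" where
  "theta' x = deriv (\<lambda>x. theta x p) x"

lemma has_field_derivative_theta:
  "x \<noteq> 0 \<Longrightarrow> ((\<lambda>x. theta x p) has_field_derivative theta' x) (at x within T)"
  unfolding theta'_def using holomorphic_theta by (intro holomorphic_derivI[of _ "-{0}"]) auto

lemma theta'_1_nonzero: "theta' 1 \<noteq> 0"
proof -
  define R where "R = (\<lambda>y. qpoch_inf p (p * y) * qpoch_inf p (p / y))"
  have "R holomorphic_on (- {0})" unfolding R_def
    by (intro holomorphic_on_mult holomorphic_qpoch_inf_compose holomorphic_intros) auto
  then have "(R has_field_derivative deriv R 1) (at 1)"
    by (intro holomorphic_derivI[of _ "-{0}"]) auto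
  from DERIV_mult[OF DERIV_diff[OF DERIV_const[of 1] DERIV_ident] this]
  have "((\<lambda>y. (1 - y) * R y) has_field_derivative - R 1) (at 1)" by simp
  then have "((\<lambda>x. theta x p) has_field_derivative - R 1) (at 1)"
  proof (rule has_field_derivative_transform_within_open[of _ _ _ "- {0}"])
    show "(1 - x) * R x = theta x p" if "x \<in> - {0}" for x
      unfolding R_def theta_eq_qpoch_inf using qpoch_inf_split_head[of x] by simp
  qed auto
  then have "theta' 1 = - R 1"
    using DERIV_unique[OF has_field_derivative_theta[of 1 UNIV]] by simp
  moreover have "R 1 \<noteq> 0" unfolding R_def using qpoch_inf_nome_nonzero by simp
  ultimately show ?thesis by simp
qed

lemma theta'_nome_mult:
  assumes x: "x \<noteq> 0" and z: "theta x p = 0"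
  shows "theta' (p * x) * p * x = - theta' x"
proof -
  have "((\<lambda>y. theta (p * y) p) has_field_derivative theta' (p * x) * p) (at x)"
    by (rule DERIV_chain2[OF has_field_derivative_theta])
      (use x in \<open>auto intro!: derivative_eq_intros\<close>)
  from DERIV_mult[OF this DERIV_ident]
  have "((\<lambda>y. theta (p * y) p * y) has_field_derivative theta' (p * x) * p * x) (at x)"
    using theta_nome_mult[OF x] z x by auto
  then have "((\<lambda>y. - theta y p) has_field_derivative theta' (p * x) * p * x) (at x)"
    by (rule has_field_derivative_transform_within_open[of _ _ _ "- {0}"])
      (use x theta_nome_mult in auto)
  moreover have "((\<lambda>y. - theta y p) has_field_derivative - theta' x) (at x)"
    using DERIV_minus[OF has_field_derivative_theta[OF x]] by simp
  ultimately show ?thesis by (rule DERIV_unique)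
qed

lemma theta'_power_int_nome_nonzero: "theta' (p powi j) \<noteq> 0"
proof -
  have "theta' (p ^ n) \<noteq> 0 \<and> theta' (p powi (- int n)) \<noteq> 0" for n
  proof (induction n)
    case 0
    then show ?case using theta'_1_nonzero by simp
  next
    case (Suc n)
    have "theta' (p * p ^ n) * p * p ^ n = - theta' (p ^ n)"
      by (rule theta'_nome_mult) (use theta_power_int_nome[of "int n"] in auto)
    moreover define y where "y = p powi (- int (Suc n))"
    have "p * y = p powi (- int n)" "y \<noteq> 0" unfolding y_def
      by (simp_all only: power_int_minus power_int_of_nat) (simp_all add: field_simps)
    moreover have "theta' (p * y) * p * y = - theta' y"
      by (rule theta'_nome_mult) (simp_all add: y_def theta_power_int_nome)
    ultimately show ?case using Suc.IH unfolding y_def by auto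
  qed
  then show ?thesis
    by (cases j rule: int_cases2) (auto simp: power_int_of_nat)
qed

lemma theta'_nonzero_at_zero: "x \<noteq> 0 \<Longrightarrow> theta x p = 0 \<Longrightarrow> theta' x \<noteq> 0"
  using theta_eq_0_iff theta'_power_int_nome_nonzero by blast

lemma nome_power_int_invariant:
  assumes P: "\<And>z. z \<noteq> 0 \<Longrightarrow> P (p * z) = P z" and z: "z \<noteq> 0"
  shows "P (p powi j * z) = P z"
proof -
  have pow: "P (p ^ n * z) = P z" if "z \<noteq> 0" for n z
    using that by (induction n) (simp_all add: P mult.assoc)
  show ?thesis
  proof (cases "j \<ge> 0")
    case True
    then obtain n where "j = int n" using zero_le_imp_eq_int by blast
    then show ?thesis using pow[OF z] by (simp add: power_int_of_nat)
  next
    case False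
    define n where "n = nat (- j)"
    have pj: "p powi j = inverse (p ^ n)"
      unfolding n_def using False by (simp add: power_int_def power_inverse)
    have "P (p ^ n * (p powi j * z)) = P (p powi j * z)"
      by (rule pow) (use z in simp)
    then show ?thesis unfolding pj by (simp add: mult.assoc[symmetric])
  qed
qed

lemma exists_nome_power_in_annulus:
  assumes z: "z \<noteq> 0"
  shows "\<exists>j::int. norm p \<le> norm (p powi j * z) \<and> norm (p powi j * z) \<le> 1"
proof -
  define L where "L = ln (norm p)"
  have L0: "L < 0" unfolding L_def using norm_nome_pos norm_nome_less_1 by simp
  define k where "k = floor (ln (norm z) / L)"
  have k1: "of_int k \<le> ln (norm z) / L" and k2: "ln (norm z) / L < of_int k + 1"
    unfolding k_def by linarith+
  have e1: "ln (norm z) \<le> of_int k * L"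
    using k1 L0 by (simp add: pos_le_divide_eq neg_le_divide_eq mult.commute)
  have e2: "(of_int k + 1) * L < ln (norm z)"
    using k2 L0 by (simp add: neg_divide_less_eq mult.commute)
  have "norm p powi (- k) = norm p powr real_of_int (- k)"
    using norm_nome_pos by (subst powr_real_of_int') auto
  then have eq: "norm (p powi (- k) * z) = exp (ln (norm z) - of_int k * L)"
    using z norm_nome_pos
    by (simp add: norm_mult norm_power_int powr_def L_def exp_diff field_simps flip: exp_add)
  have "exp L < exp (ln (norm z) - of_int k * L)" using e2 by (simp add: algebra_simps)
  then have "norm p \<le> norm (p powi (- k) * z)"
    using norm_nome_pos eq by (simp add: L_def)
  moreover have "norm (p powi (- k) * z) \<le> 1" using e1 eq by simp
  ultimately show ?thesis by blast
qed

end

section \<open>Liouville's theorem and the addition formula\<close>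

lemma eventually_nonzero_near_simple_zero:
  fixes g :: "complex \<Rightarrow> complex"
  assumes "(g has_field_derivative g') (at z0)" and "g z0 = 0" and "g' \<noteq> 0"
  shows "eventually (\<lambda>z. g z \<noteq> 0) (at z0)"
proof -
  have "((\<lambda>y. g y / (y - z0)) \<longlongrightarrow> g') (at z0)"
    using assms(1,2) unfolding has_field_derivative_iff by simp
  from tendsto_imp_eventually_ne[OF this assms(3)] show ?thesis
    by eventually_elim auto
qed

lemma lhopital_complex:
  fixes f g :: "complex \<Rightarrow> complex"
  assumes df: "(f has_field_derivative f') (at z0)" and dg: "(g has_field_derivative g') (at z0)"
    and f0: "f z0 = 0" and g0: "g z0 = 0" and g'0: "g' \<noteq> 0"
  shows "((\<lambda>z. f z / g z) \<longlongrightarrow> f' / g') (at z0)"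
proof -
  have A: "((\<lambda>y. f y / (y - z0)) \<longlongrightarrow> f') (at z0)"
    using df unfolding has_field_derivative_iff f0 by simp
  have B: "((\<lambda>y. g y / (y - z0)) \<longlongrightarrow> g') (at z0)"
    using dg unfolding has_field_derivative_iff g0 by simp
  have "((\<lambda>y. (f y / (y - z0)) / (g y / (y - z0))) \<longlongrightarrow> f' / g') (at z0)"
    by (rule tendsto_divide[OF A B g'0])
  then show ?thesis
  proof (rule Lim_transform_eventually)
    show "\<forall>\<^sub>F y in at z0. f y / (y - z0) / (g y / (y - z0)) = f y / g y"
      by (auto simp: eventually_at_filter)
  qed
qed

text \<open>\<open>simple_zeros\<close> says that the two factors of \<open>D\<close> below have no common zero, so all zeros
  of \<open>D\<close> are simple.\<close>
locale theta_pair_liouville = theta_nome +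
  fixes a e :: complex and N :: "complex \<Rightarrow> complex"
  assumes a_nonzero: "a \<noteq> 0" and e_nonzero: "e \<noteq> 0" and simple_zeros: "theta (e^2 / a) p \<noteq> 0"
    and holomorphic_N: "N holomorphic_on (- {0})"
    and N_nome_mult: "\<And>z. z \<noteq> 0 \<Longrightarrow> N (p * z) * (a * z^2) = N z"
    and N_inverse_e: "N (1 / e) = 0" and N_e_over_a: "N (e / a) = 0"
begin

definition D :: "complex \<Rightarrow> complex" where
  "D z = theta (e * z) p * theta (a * z / e) p"

definition D' :: "complex \<Rightarrow> complex" where
  "D' z = e * theta' (e * z) * theta (a * z / e) p + (a / e) * theta' (a * z / e) * theta (e * z) p"

lemma has_field_derivative_D: "z \<noteq> 0 \<Longrightarrow> (D has_field_derivative D' z) (at z)"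
proof -
  assume z: "z \<noteq> 0"
  have "((\<lambda>y. theta (e * y) p) has_field_derivative theta' (e * z) * e) (at z)"
    by (rule DERIV_chain2[OF has_field_derivative_theta])
      (use z e_nonzero in \<open>auto intro!: derivative_eq_intros\<close>)
  moreover have "((\<lambda>y. theta (a * y / e) p) has_field_derivative theta' (a * z / e) * (a / e)) (at z)"
    by (rule DERIV_chain2[OF has_field_derivative_theta])
      (use z e_nonzero a_nonzero in \<open>auto intro!: derivative_eq_intros\<close>)
  ultimately show ?thesis
    using DERIV_mult unfolding D_def[abs_def] D'_def by (fastforce simp: algebra_simps)
qed

lemma has_field_derivative_N: "z \<noteq> 0 \<Longrightarrow> (N has_field_derivative deriv N z) (at z)"
  using holomorphic_N by (intro holomorphic_derivI[of _ "-{0}"]) auto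

lemma D_nome_mult: "z \<noteq> 0 \<Longrightarrow> D (p * z) * (a * z^2) = D z"
proof -
  assume z: "z \<noteq> 0"
  have 1: "theta (p * (e * z)) p * (e * z) = - theta (e * z) p"
    by (rule theta_nome_mult) (use z e_nonzero in auto)
  have 2: "theta (p * (a * z / e)) p * (a * z / e) = - theta (a * z / e) p"
    by (rule theta_nome_mult) (use z e_nonzero a_nonzero in auto)
  have "D (p * z) * (a * z^2)
      = (theta (p * (e * z)) p * (e * z)) * (theta (p * (a * z / e)) p * (a * z / e))"
    unfolding D_def using e_nonzero by (simp add: field_simps power2_eq_square)
  also have "\<dots> = D z"
    unfolding 1 2 D_def by simp
  finally show ?thesis .
qed

lemma N_eq_0_if_D_eq_0:
  assumes z: "z \<noteq> 0" and Dz: "D z = 0"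
  shows "N z = 0"
proof -
  have N_orbit: "N (p powi j * w) = 0 \<longleftrightarrow> N w = 0" if "w \<noteq> 0" for j w
    using nome_power_int_invariant[of "\<lambda>w. N w = 0", OF _ that] N_nome_mult a_nonzero
    by (metis mult_eq_0_iff power_eq_0_iff)
  have "theta (e * z) p = 0 \<or> theta (a * z / e) p = 0" using Dz by (simp add: D_def)
  then show ?thesis
  proof
    assume "theta (e * z) p = 0"
    then obtain j where "e * z = p powi j" using theta_eq_0_iff[of "e * z"] z e_nonzero by auto
    then have "z = p powi j * (1 / e)" using e_nonzero by (simp add: field_simps)
    then show ?thesis using N_orbit[of "1 / e" j] N_inverse_e e_nonzero by simp
  next
    assume "theta (a * z / e) p = 0"
    then obtain j where "a * z / e = p powi j"
      using theta_eq_0_iff[of "a * z / e"] z e_nonzero a_nonzero by auto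
    then have "z = p powi j * (e / a)" using e_nonzero a_nonzero by (simp add: field_simps)
    then show ?thesis using N_orbit[of "e / a" j] N_e_over_a e_nonzero a_nonzero by simp
  qed
qed

lemma D'_nonzero_if_D_eq_0:
  assumes z: "z \<noteq> 0" and Dz: "D z = 0"
  shows "D' z \<noteq> 0"
proof -
  have not_both: "\<not> (theta (e * z) p = 0 \<and> theta (a * z / e) p = 0)"
  proof
    assume "theta (e * z) p = 0 \<and> theta (a * z / e) p = 0"
    then obtain i j where i: "e * z = p powi i" and j: "a * z / e = p powi j"
      using theta_eq_0_iff[of "e * z"] theta_eq_0_iff[of "a * z / e"] z e_nonzero a_nonzero by auto
    have "e^2 / a = (e * z) / (a * z / e)"
      using z e_nonzero a_nonzero by (simp add: field_simps power2_eq_square)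
    also have "\<dots> = p powi (i - j)" unfolding i j by (simp add: power_int_diff)
    finally show False using simple_zeros theta_power_int_nome by simp
  qed
  have "theta (e * z) p = 0 \<or> theta (a * z / e) p = 0" using Dz by (simp add: D_def)
  then show ?thesis
  proof
    assume A: "theta (e * z) p = 0"
    then have "theta' (e * z) \<noteq> 0" using theta'_nonzero_at_zero z e_nonzero by simp
    then show ?thesis using A not_both e_nonzero unfolding D'_def by simp
  next
    assume A: "theta (a * z / e) p = 0"
    then have "theta' (a * z / e) \<noteq> 0" using theta'_nonzero_at_zero z e_nonzero a_nonzero by simp
    then show ?thesis using A not_both e_nonzero a_nonzero unfolding D'_def by simp
  qed
qed

text \<open>The quotient \<open>N / D\<close>, continued at the (simple) zeros of \<open>D\<close> by l'Hospital's rule.\<close>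
definition g :: "complex \<Rightarrow> complex" where
  "g z = (if D z = 0 then deriv N z / D' z else N z / D z)"

lemma g_at_zero_of_D:
  assumes z: "z \<noteq> 0" and Dz: "D z = 0"
  shows "(g \<longlongrightarrow> g z) (at z)" and "eventually (\<lambda>w. D w \<noteq> 0) (at z)"
proof -
  show ev: "eventually (\<lambda>w. D w \<noteq> 0) (at z)"
    by (rule eventually_nonzero_near_simple_zero[OF has_field_derivative_D[OF z] Dz
          D'_nonzero_if_D_eq_0[OF z Dz]])
  have "((\<lambda>w. N w / D w) \<longlongrightarrow> g z) (at z)"
    using lhopital_complex[OF has_field_derivative_N[OF z] has_field_derivative_D[OF z]
        N_eq_0_if_D_eq_0[OF z Dz] Dz D'_nonzero_if_D_eq_0[OF z Dz]] Dz
    by (simp add: g_def)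
  then show "(g \<longlongrightarrow> g z) (at z)"
    by (rule Lim_transform_eventually) (use ev in \<open>eventually_elim, simp add: g_def\<close>)
qed

lemma g_differentiable_if_D_nonzero:
  assumes z: "z \<noteq> 0" and Dz: "D z \<noteq> 0"
  shows "g field_differentiable (at z)"
proof -
  have "isCont D z" using has_field_derivative_D[OF z] DERIV_isCont by blast
  from continuous_at_avoid[OF this Dz]
  obtain d where d: "d > 0" "\<And>y. dist z y < d \<Longrightarrow> D y \<noteq> 0" by blast
  have "((\<lambda>w. N w / D w) has_field_derivative (deriv N z * D z - N z * D' z) / (D z * D z)) (at z)"
    by (rule DERIV_divide[OF has_field_derivative_N[OF z] has_field_derivative_D[OF z] Dz])
  then have "(g has_field_derivative (deriv N z * D z - N z * D' z) / (D z * D z)) (at z)"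
    by (rule has_field_derivative_transform_within[OF _ d(1)])
      (use d(2) in \<open>auto simp: g_def dist_commute\<close>)
  then show ?thesis unfolding field_differentiable_def by blast
qed

lemma g_differentiable:
  assumes z: "z \<noteq> 0"
  shows "g field_differentiable (at z)"
proof (cases "D z = 0")
  case False
  then show ?thesis using g_differentiable_if_D_nonzero z by blast
next
  case True
  note L = g_at_zero_of_D[OF z True]
  obtain d where d: "d > 0" "\<And>w. w \<noteq> z \<Longrightarrow> dist w z < d \<Longrightarrow> D w \<noteq> 0"
    using L(2) unfolding eventually_at by auto
  define r where "r = min d (norm z)"
  have r0: "r > 0" unfolding r_def using d z by simp
  have "w \<noteq> 0" if "w \<in> ball z r" for w
    using that unfolding r_def by (auto simp: dist_norm)
  then have "g holomorphic_on (ball z r - {z})"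
    unfolding holomorphic_on_def
    using d(2) g_differentiable_if_D_nonzero field_differentiable_at_within
    by (metis DiffE dist_commute insertI1 mem_ball min_less_iff_conj r_def)
  moreover have "(g \<longlongrightarrow> g z) (at z within ball z r)"
    using L(1) by (rule tendsto_within_subset) simp
  ultimately have "g holomorphic_on ball z r"
    using no_isolated_singularity'[of "{z}" g "ball z r"] by auto
  then show ?thesis using r0 by (intro holomorphic_on_imp_differentiable_at[of _ "ball z r"]) auto
qed

lemma g_nome_mult_if_D_nonzero: "z \<noteq> 0 \<Longrightarrow> D z \<noteq> 0 \<Longrightarrow> g (p * z) = g z"
proof -
  assume z: "z \<noteq> 0" and Dz: "D z \<noteq> 0"
  then have Dp: "D (p * z) \<noteq> 0" using D_nome_mult[OF z] by auto
  have "g (p * z) = (N (p * z) * (a * z^2)) / (D (p * z) * (a * z^2))"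
    using Dp a_nonzero z by (simp add: g_def)
  also have "\<dots> = g z" unfolding N_nome_mult[OF z] D_nome_mult[OF z] using Dz by (simp add: g_def)
  finally show ?thesis .
qed

lemma g_nome_mult: assumes z: "z \<noteq> 0" shows "g (p * z) = g z"
proof (cases "D z = 0")
  case False
  then show ?thesis using g_nome_mult_if_D_nonzero z by blast
next
  case True
  note L = g_at_zero_of_D[OF z True]
  have "isCont g (p * z)"
    by (rule field_differentiable_imp_continuous_at[OF g_differentiable]) (use z in simp)
  then have A: "((\<lambda>w. g (p * w)) \<longlongrightarrow> g (p * z)) (at z)"
    by (rule isCont_tendsto_compose) (auto intro!: tendsto_eq_intros)
  have "eventually (\<lambda>w. w \<in> - {0}) (at z)"
    by (rule eventually_at_in_open') (use z in auto)
  then have "eventually (\<lambda>w. g (p * w) = g w) (at z)"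
    using L(2) by eventually_elim (simp add: g_nome_mult_if_D_nonzero)
  then have "((\<lambda>w. g (p * w)) \<longlongrightarrow> g z) (at z)"
    by (intro Lim_transform_eventually[OF L(1)]) (simp add: eventually_mono)
  then show ?thesis using tendsto_unique[OF _ A] by simp
qed

text \<open>\<open>s \<mapsto> g(e\<^sup>s)\<close> is entire and takes only values of \<open>g\<close> on the compact annulus
  \<open>|p| \<le> |w| \<le> 1\<close>, hence is constant by Liouville's theorem.\<close>
lemma N_eq_const_mult_D: "\<exists>C. \<forall>z. z \<noteq> 0 \<longrightarrow> N z = C * D z"
proof -
  define K where "K = {w::complex. norm p \<le> norm w \<and> norm w \<le> 1}"
  have "K = cball 0 1 \<inter> {w. norm p \<le> norm w}" by (auto simp: K_def)
  moreover have "closed {w::complex. norm p \<le> norm w}"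
    by (intro closed_Collect_le continuous_intros)
  ultimately have "compact K" using compact_Int_closed[OF compact_cball] by simp
  moreover have "continuous_on K g"
    using norm_nome_pos unfolding K_def
    by (force intro!: continuous_at_imp_continuous_on g_differentiable
        field_differentiable_imp_continuous_at)
  ultimately have bK: "bounded (g ` K)" by (intro compact_imp_bounded compact_continuous_image)
  have gh: "g holomorphic_on (- {0})"
    unfolding holomorphic_on_def using g_differentiable field_differentiable_at_within by auto
  have Gh: "(\<lambda>s. g (exp s)) holomorphic_on UNIV"
    using holomorphic_on_compose[of exp UNIV g, OF holomorphic_on_exp holomorphic_on_subset[OF gh]]
    by (auto simp: o_def image_def)
  have "range (\<lambda>s. g (exp s)) \<subseteq> g ` K"
  proof clarify
    fix s
    obtain j where "norm p \<le> norm (p powi j * exp s)" "norm (p powi j * exp s) \<le> 1"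
      using exists_nome_power_in_annulus[of "exp s"] by auto
    moreover have "g (p powi j * exp s) = g (exp s)"
      by (rule nome_power_int_invariant[of g, OF g_nome_mult]) auto
    ultimately show "g (exp s) \<in> g ` K" unfolding K_def by (metis image_eqI mem_Collect_eq)
  qed
  then have "bounded (range (\<lambda>s. g (exp s)))" using bK bounded_subset by blast
  then obtain C where C: "\<And>s. g (exp s) = C"
    using Liouville_theorem[OF Gh] unfolding constant_on_def by blast
  have "N z = C * D z" if z: "z \<noteq> 0" for z
  proof (cases "D z = 0")
    case True
    then show ?thesis using N_eq_0_if_D_eq_0[OF z] by simp
  next
    case False
    have "g z = C" using C[of "Ln z"] z by simp
    then show ?thesis using False by (simp add: g_def field_simps)
  qed
  then show ?thesis by blast
qed

end

context theta_nome
begin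

lemma eventually_theta_nonzero_at:
  assumes "y0 \<noteq> 0"
  shows "eventually (\<lambda>y. theta y p \<noteq> 0) (at y0)"
proof (cases "theta y0 p = 0")
  case True
  then show ?thesis
    using eventually_nonzero_near_simple_zero[OF has_field_derivative_theta]
      theta'_nonzero_at_zero assms by blast
next
  case False
  then show ?thesis
    using tendsto_imp_eventually_ne[OF tendsto_theta[OF tendsto_ident_at assms]] by blast
qed

lemma eventually_theta_nonzero:
  assumes "(f \<longlongrightarrow> y0) F" and "y0 \<noteq> 0" and "eventually (\<lambda>t. f t \<noteq> y0) F"
  shows "eventually (\<lambda>t. theta (f t) p \<noteq> 0) F"
proof -
  have "filterlim f (at y0) F"
    using assms(1,3) by (simp add: filterlim_at)
  then show ?thesis
    by (rule eventually_compose_filterlim[OF eventually_theta_nonzero_at[OF assms(2)]])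
qed

lemma eventually_theta_perturbed_nonzero:
  assumes "x \<noteq> 0"
  shows "eventually (\<lambda>t. theta (x * (1 + t)) p \<noteq> 0) (at 0)"
    and "eventually (\<lambda>t. theta (x / (1 + t)) p \<noteq> 0) (at 0)"
    and "eventually (\<lambda>t. theta (x * (1 + t)^2) p \<noteq> 0) (at 0)"
proof -
  have scaled: "eventually (\<lambda>t. theta (x * f t) p \<noteq> 0) (at 0)"
    if "(f \<longlongrightarrow> 1) (at 0)" "eventually (\<lambda>t. f t \<noteq> 1) (at (0::complex))" for f
  proof (rule eventually_theta_nonzero)
    show "((\<lambda>t. x * f t) \<longlongrightarrow> x) (at 0)" using tendsto_mult[OF tendsto_const that(1)] by simp
    show "eventually (\<lambda>t. x * f t \<noteq> x) (at 0)" using that(2) by eventually_elim (use assms in simp)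
  qed (use assms in simp)
  have small: "eventually (\<lambda>t. t \<noteq> 0 \<and> norm t < 1) (at (0::complex))"
    unfolding eventually_at by (intro exI[of _ 1]) (auto simp: dist_norm)
  have lim: "((\<lambda>t. 1 + t) \<longlongrightarrow> 1) (at (0::complex))"
    using tendsto_add[OF tendsto_const[of 1] tendsto_ident_at[of 0 UNIV]] by simp
  have "eventually (\<lambda>t::complex. 1 + t \<noteq> 1) (at 0)"
    using small by eventually_elim simp
  with lim show "eventually (\<lambda>t. theta (x * (1 + t)) p \<noteq> 0) (at 0)"
    by (rule scaled)
  have "eventually (\<lambda>t::complex. 1 / (1 + t) \<noteq> 1) (at 0)"
    using small by eventually_elim (simp add: divide_eq_eq)
  then have "eventually (\<lambda>t. theta (x * (1 / (1 + t))) p \<noteq> 0) (at 0)"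
    by (rule scaled[OF tendsto_divide[OF tendsto_const[of 1] lim, simplified]])
  then show "eventually (\<lambda>t. theta (x / (1 + t)) p \<noteq> 0) (at 0)"
    by simp
  have "eventually (\<lambda>t::complex. (1 + t)^2 \<noteq> 1) (at 0)"
    using small
  proof eventually_elim
    case (elim t)
    show "(1 + t)^2 \<noteq> 1"
    proof
      assume "(1 + t)^2 = 1"
      then have "t * (t + 2) = 0" by (simp add: algebra_simps power2_eq_square)
      then have "t = -2" using elim by (simp add: eq_neg_iff_add_eq_0)
      then show False using elim by simp
    qed
  qed
  then show "eventually (\<lambda>t. theta (x * (1 + t)^2) p \<noteq> 0) (at 0)"
    by (rule scaled[OF tendsto_power[OF lim, of 2, simplified]])
qed

lemma theta_pair_nome_mult:
  assumes "c1 \<noteq> 0" "c2 \<noteq> 0" "z \<noteq> 0"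
  shows "theta (c1 * (p * z)) p * theta (c2 * (p * z)) p * (c1 * c2 * z^2)
       = theta (c1 * z) p * theta (c2 * z) p"
proof -
  have "theta (c1 * (p * z)) p * theta (c2 * (p * z)) p * (c1 * c2 * z^2)
      = (theta (p * (c1 * z)) p * (c1 * z)) * (theta (p * (c2 * z)) p * (c2 * z))"
    by (simp add: algebra_simps power2_eq_square)
  also have "\<dots> = theta (c1 * z) p * theta (c2 * z) p"
    using assms by (simp add: theta_nome_mult)
  finally show ?thesis .
qed

text \<open>The numerator \<open>N\<close> below satisfies the hypotheses of \<open>theta_pair_liouville\<close>, so it is a
  multiple of \<open>D\<close>; as it also vanishes at \<open>1/e\<^sub>2\<close>, where \<open>D\<close> does not, it vanishes identically.\<close>
lemma theta_addition_generic:
  assumes a: "a \<noteq> 0" and e: "e \<noteq> 0" and e1: "e1 \<noteq> 0" and e2: "e2 \<noteq> 0" and z: "z \<noteq> 0"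
    and g1: "theta (e1^2 / a) p \<noteq> 0" and g2: "theta (e1 / e2) p \<noteq> 0"
    and g3: "theta (e1 * e2 / a) p \<noteq> 0"
  shows "theta (e1 * z) p * theta ((a / e1) * z) p * theta (e * e2 / a) p * theta (e / e2) p
       - theta (e2 * z) p * theta ((a / e2) * z) p * theta (e * e1 / a) p * theta (e / e1) p
       = (e / e1) * theta (e1 * e2 / a) p * theta (e1 / e2) p * theta (e * z) p * theta ((a / e) * z) p"
proof -
  define A1 where "A1 = theta (e * e2 / a) p * theta (e / e2) p"
  define A2 where "A2 = theta (e * e1 / a) p * theta (e / e1) p"
  define B where "B = (e / e1) * theta (e1 * e2 / a) p * theta (e1 / e2) p"
  define N where "N = (\<lambda>z. theta (e1 * z) p * theta ((a / e1) * z) p * A1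
       - theta (e2 * z) p * theta ((a / e2) * z) p * A2 - B * (theta (e * z) p * theta ((a / e) * z) p))"
  have Nh: "N holomorphic_on (- {0})"
    unfolding N_def
    by (intro holomorphic_on_diff holomorphic_on_mult holomorphic_on_const holomorphic_theta_scaled)
      (use a e e1 e2 in auto)
  have Nq: "N (p * z) * (a * z^2) = N z" if z: "z \<noteq> 0" for z
    unfolding N_def
    using theta_pair_nome_mult[of e1 "a / e1" z] theta_pair_nome_mult[of e2 "a / e2" z]
      theta_pair_nome_mult[of e "a / e" z] a e e1 e2 z
    by (simp add: algebra_simps)
  have products: "e1 * e2 \<noteq> 0" "e * e1 \<noteq> 0" "e * e2 \<noteq> 0" using e e1 e2 by auto
  note i1 = theta_inverse_div[OF e1 e2] and i2 = theta_inverse_div[OF products(1) a]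
    and i3 = theta_inverse_div[OF products(2) a] and i4 = theta_inverse_div[OF e e1]
    and i5 = theta_inverse_div[OF products(3) a]
  have "N (1 / e1) = - theta (e2 / e1) p * theta (a / (e1 * e2)) p * A2
      - B * (theta (e / e1) p * theta (a / (e * e1)) p)"
    unfolding N_def using e1 theta_1 by (simp add: field_simps)
  then have N1: "N (1 / e1) = 0"
    unfolding i1 i2 i3 A2_def B_def using a e e1 e2 by (simp add: field_simps)
  have "N (e1 / a) = - theta (e1 * e2 / a) p * theta (e1 / e2) p * A2
      - B * (theta (e * e1 / a) p * theta (e1 / e) p)"
    unfolding N_def using e1 theta_1 a by (simp add: field_simps)
  then have N2: "N (e1 / a) = 0"
    unfolding i4 A2_def B_def using a e e1 e2 by (simp add: field_simps)
  interpret L: theta_pair_liouville p a e1 N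
    by unfold_locales (use norm_nome_pos norm_nome_less_1 a e1 g1 Nh Nq N1 N2 in auto)
  obtain C where C: "\<And>z. z \<noteq> 0 \<Longrightarrow> N z = C * L.D z" using L.N_eq_const_mult_D by blast
  have "N (1 / e2) = theta (e1 / e2) p * theta (a / (e1 * e2)) p * A1
      - B * (theta (e / e2) p * theta (a / (e * e2)) p)"
    unfolding N_def using e2 theta_1 by (simp add: field_simps)
  then have N3: "N (1 / e2) = 0"
    unfolding i2 i5 A1_def B_def using a e e1 e2 by (simp add: field_simps)
  have "L.D (1 / e2) = theta (e1 / e2) p * theta (a / (e1 * e2)) p"
    unfolding L.D_def by (simp add: field_simps)
  then have D3: "L.D (1 / e2) \<noteq> 0"
    unfolding i2 using g2 g3 a e1 e2 by simp
  have "C = 0" using C[of "1/e2"] N3 D3 e2 by simp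
  then have "N z = 0" using C[OF z] by simp
  then show ?thesis unfolding N_def A1_def A2_def B_def by (simp add: algebra_simps)
qed

text \<open>The hypotheses of the generic version hold for \<open>e\<^sub>1(1+t)\<close> in place of \<open>e\<^sub>1\<close> when \<open>t \<noteq> 0\<close>
  is small; let \<open>t \<rightarrow> 0\<close>.\<close>
lemma theta_addition:
  assumes a: "a \<noteq> 0" and e: "e \<noteq> 0" and e1: "e1 \<noteq> 0" and e2: "e2 \<noteq> 0" and z: "z \<noteq> 0"
  shows "theta (e1 * z) p * theta ((a / e1) * z) p * theta (e * e2 / a) p * theta (e / e2) p
       - theta (e2 * z) p * theta ((a / e2) * z) p * theta (e * e1 / a) p * theta (e / e1) p
       = (e / e1) * theta (e1 * e2 / a) p * theta (e1 / e2) p * theta (e * z) p * theta ((a / e) * z) p"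
    (is "?L e1 = ?R e1")
proof -
  define f where "f = (\<lambda>t::complex. e1 * (1 + t))"
  have f0: "(f \<longlongrightarrow> e1) (at 0)" unfolding f_def by (auto intro!: tendsto_eq_intros)
  have "eventually (\<lambda>t. t \<noteq> -1) (at (0::complex))"
    unfolding eventually_at by (intro exI[of _ 1]) (auto simp: dist_norm)
  moreover have "eventually (\<lambda>t. theta (e1^2 / a * (1 + t)^2) p \<noteq> 0) (at 0)"
    by (rule eventually_theta_perturbed_nonzero(3)) (use a e1 in simp)
  moreover have "eventually (\<lambda>t. theta (e1 / e2 * (1 + t)) p \<noteq> 0) (at 0)"
    by (rule eventually_theta_perturbed_nonzero(1)) (use e1 e2 in simp)
  moreover have "eventually (\<lambda>t. theta (e1 * e2 / a * (1 + t)) p \<noteq> 0) (at 0)"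
    by (rule eventually_theta_perturbed_nonzero(1)) (use a e1 e2 in simp)
  ultimately have ev: "eventually (\<lambda>t. ?L (f t) = ?R (f t)) (at 0)"
  proof eventually_elim
    case (elim t)
    then show ?case
      by (intro theta_addition_generic)
        (use a e e1 e2 z in \<open>auto simp: f_def add_eq_0_iff power_mult_distrib ac_simps\<close>)
  qed
  have "((\<lambda>t. ?R (f t)) \<longlongrightarrow> ?R e1) (at 0)"
    using f0 a e e1 e2 z by (auto intro!: tendsto_intros)
  then have "((\<lambda>t. ?L (f t)) \<longlongrightarrow> ?R e1) (at 0)"
    by (rule Lim_transform_eventually) (use ev in \<open>eventually_elim, simp\<close>)
  moreover have "((\<lambda>t. ?L (f t)) \<longlongrightarrow> ?L e1) (at 0)"
    using f0 a e e1 e2 z by (auto intro!: tendsto_intros)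
  ultimately show ?thesis
    using tendsto_unique[OF at_neq_bot] by blast
qed

lemma theta_pair_span:
  assumes a: "a \<noteq> 0" and e: "e \<noteq> 0" and e1: "e1 \<noteq> 0" and e2: "e2 \<noteq> 0"
    and "theta (e1 / e2) p \<noteq> 0" and "theta (e1 * e2 / a) p \<noteq> 0"
  obtains \<alpha> \<beta> where "\<And>z. z \<noteq> 0 \<Longrightarrow> theta (e * z) p * theta (a * z / e) p
      = \<alpha> * (theta (e1 * z) p * theta (a * z / e1) p) - \<beta> * (theta (e2 * z) p * theta (a * z / e2) p)"
proof -
  define K where "K = (e / e1) * theta (e1 * e2 / a) p * theta (e1 / e2) p"
  have "K \<noteq> 0" unfolding K_def using assms by simp
  then show ?thesis
    using that[of "theta (e * e2 / a) p * theta (e / e2) p / K" "theta (e * e1 / a) p * theta (e / e1) p / K"]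
      theta_addition[OF a e e1 e2]
    unfolding K_def by (simp add: field_simps)
qed

end

section \<open>An elliptic partial fraction identity\<close>

context theta_nome
begin

definition interp_denom :: "complex \<Rightarrow> ('b \<Rightarrow> complex) \<Rightarrow> 'b set \<Rightarrow> 'b \<Rightarrow> complex" where
  "interp_denom a z S k = (\<Prod>j\<in>S-{k}. theta (z k / z j) p * theta (a * z k * z j) p)"

lemma interp_denom_remove:
  assumes "finite S" "s \<in> S" "k \<noteq> s"
  shows "interp_denom a z S k
       = theta (z k / z s) p * theta (a * z k * z s) p * interp_denom a z (S - {s}) k"
proof -
  have "S - {k} = insert s (S - {s} - {k})" using assms by auto
  then show ?thesis unfolding interp_denom_def using assms
    by (simp add: prod.insert_remove Diff_insert2[symmetric] insert_commute)
qed

text \<open>Multiplying the numerators by \<open>\<theta>(ez\<^sub>k)\<theta>(az\<^sub>k/e)\<close> with \<open>e = az\<^sub>s\<close> kills the term \<open>k = s\<close>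
  and cancels the factor of the denominators that belongs to the node \<open>s\<close>.\<close>
lemma interp_sum_remove_node:
  assumes "finite S" "s \<in> S" and a: "a \<noteq> 0" and z0: "\<forall>k\<in>S. z k \<noteq> 0"
    and nd: "\<forall>k\<in>S. \<forall>j\<in>S. j \<noteq> k \<longrightarrow> theta (z k / z j) p \<noteq> 0 \<and> theta (a * z k * z j) p \<noteq> 0"
  shows "(\<Sum>k\<in>S. z k * P k * (theta (a * z s * z k) p * theta (a * z k / (a * z s)) p)
            / interp_denom a z S k)
       = (\<Sum>k\<in>S - {s}. z k * P k / interp_denom a z (S - {s}) k)"
proof -
  have "(\<Sum>k\<in>S. z k * P k * (theta (a * z s * z k) p * theta (a * z k / (a * z s)) p)
            / interp_denom a z S k)
      = z s * P s * (theta (a * z s * z s) p * theta (a * z s / (a * z s)) p) / interp_denom a z S s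
        + (\<Sum>k\<in>S - {s}. z k * P k * (theta (a * z s * z k) p * theta (a * z k / (a * z s)) p)
            / interp_denom a z S k)"
    using assms(1,2) by (simp add: sum.remove)
  also have "z s * P s * (theta (a * z s * z s) p * theta (a * z s / (a * z s)) p) = 0"
    using z0 assms(2) a theta_1 by simp
  also have "(\<Sum>k\<in>S - {s}. z k * P k * (theta (a * z s * z k) p * theta (a * z k / (a * z s)) p)
            / interp_denom a z S k)
      = (\<Sum>k\<in>S - {s}. z k * P k / interp_denom a z (S - {s}) k)"
  proof (rule sum.cong)
    fix k assume k: "k \<in> S - {s}"
    have "theta (z k / z s) p \<noteq> 0" "theta (a * z k * z s) p \<noteq> 0"
      using nd assms(2) k by auto
    then show "z k * P k * (theta (a * z s * z k) p * theta (a * z k / (a * z s)) p)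
          / interp_denom a z S k = z k * P k / interp_denom a z (S - {s}) k"
      using interp_denom_remove[OF assms(1,2), of k a z] k a by (simp add: ac_simps)
  qed simp
  finally show ?thesis by simp
qed

lemma theta_interpolation_two_nodes:
  assumes "s \<noteq> t" "z s \<noteq> 0" "z t \<noteq> 0" "theta (z s / z t) p \<noteq> 0" "theta (a * z s * z t) p \<noteq> 0"
  shows "(\<Sum>k\<in>{s, t}. z k / interp_denom a z {s, t} k) = 0"
proof -
  have "{s, t} - {s} = {t}" "{s, t} - {t} = {s}" using assms(1) by auto
  moreover note i = theta_inverse_div[OF assms(2,3)]
  ultimately show ?thesis
    using assms by (simp add: interp_denom_def i field_simps)
qed

lemma theta_interpolation_sum_eq_0:
  fixes E :: "'c set" and S :: "'b set"
  assumes "finite E" "finite S" "card S = card E + 2" and a: "a \<noteq> 0"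
    and z0: "\<forall>k\<in>S. z k \<noteq> 0" and e0: "\<forall>i\<in>E. e i \<noteq> 0"
    and nd: "\<forall>k\<in>S. \<forall>j\<in>S. j \<noteq> k \<longrightarrow> theta (z k / z j) p \<noteq> 0 \<and> theta (a * z k * z j) p \<noteq> 0"
  shows "(\<Sum>k\<in>S. z k * (\<Prod>i\<in>E. theta (e i * z k) p * theta (a * z k / e i) p)
           / interp_denom a z S k) = 0"
  using assms(1,2,3) z0 e0 nd
proof (induction E arbitrary: S rule: finite_induct)
  case empty
  then have "card S = 2" by simp
  then obtain s t where st: "S = {s, t}" "s \<noteq> t" by (meson card_2_iff)
  then show ?case
    using theta_interpolation_two_nodes[of s t z a] empty.prems by simp
next
  case (insert x E)
  have cS: "card S = card E + 3" using insert by simp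
  then obtain s1 where s1: "s1 \<in> S" by fastforce
  have cS1: "card (S - {s1}) = card E + 2" using cS s1 insert.prems by simp
  then have "S - {s1} \<noteq> {}" by (intro notI) simp
  then obtain s2 where s2: "s2 \<in> S" "s2 \<noteq> s1" by blast
  have cS2: "card (S - {s2}) = card E + 2" using cS s2 insert.prems by simp
  define P where "P = (\<lambda>k. \<Prod>i\<in>E. theta (e i * z k) p * theta (a * z k / e i) p)"
  define e1 where "e1 = a * z s1"
  define e2 where "e2 = a * z s2"
  have ex: "e x \<noteq> 0" using insert.prems by auto
  have e12: "e1 \<noteq> 0" "e2 \<noteq> 0" unfolding e1_def e2_def using a insert.prems s1 s2 by auto
  have "theta (e1 / e2) p \<noteq> 0"
    unfolding e1_def e2_def using insert.prems(5) s1 s2 a by auto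
  moreover have "e1 * e2 / a = a * z s1 * z s2"
    unfolding e1_def e2_def using a by (simp add: field_simps)
  then have "theta (e1 * e2 / a) p \<noteq> 0" using insert.prems(5) s1 s2 by auto
  ultimately obtain \<alpha> \<beta> where span: "\<And>w. w \<noteq> 0 \<Longrightarrow> theta (e x * w) p * theta (a * w / e x) p
      = \<alpha> * (theta (e1 * w) p * theta (a * w / e1) p) - \<beta> * (theta (e2 * w) p * theta (a * w / e2) p)"
    using theta_pair_span[OF a ex e12] by blast
  have "(\<Sum>k\<in>S. z k * P k * (theta (a * z s * z k) p * theta (a * z k / (a * z s)) p)
          / interp_denom a z S k) = 0" if "s \<in> S" "card (S - {s}) = card E + 2" for s
    unfolding interp_sum_remove_node[OF insert.prems(1) that(1) a insert.prems(3,5)] P_def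
    by (rule insert.IH) (use insert.prems that in auto)
  note drop = this[OF s1 cS1, folded e1_def] this[OF s2(1) cS2, folded e2_def]
  have "(\<Sum>k\<in>S. z k * (\<Prod>i\<in>insert x E. theta (e i * z k) p * theta (a * z k / e i) p)
          / interp_denom a z S k)
      = (\<Sum>k\<in>S. z k * P k * (theta (e x * z k) p * theta (a * z k / e x) p) / interp_denom a z S k)"
    unfolding P_def using insert.hyps by (intro sum.cong) (simp_all add: ac_simps)
  also have "\<dots> = \<alpha> * (\<Sum>k\<in>S. z k * P k * (theta (e1 * z k) p * theta (a * z k / e1) p)
                      / interp_denom a z S k)
                - \<beta> * (\<Sum>k\<in>S. z k * P k * (theta (e2 * z k) p * theta (a * z k / e2) p)
                      / interp_denom a z S k)"
    unfolding sum_distrib_left sum_subtractf[symmetric]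
    by (intro sum.cong refl, subst span) (use insert.prems in \<open>auto simp: algebra_simps diff_divide_distrib\<close>)
  also have "\<dots> = 0" using drop by (simp add: ac_simps)
  finally show ?case .
qed

end

section \<open>Elliptic shifted factorials\<close>

lemma ell_fac_0 [simp]: "ell_fac x q p 0 = 1"
  by (simp add: ell_fac_def)

lemma ell_fac_Suc: "ell_fac x q p (Suc k) = ell_fac x q p k * theta (x * q ^ k) p"
  by (simp add: ell_fac_def)

lemma ell_fac_add: "ell_fac x q p (m + k) = ell_fac x q p m * ell_fac (x * q ^ m) q p k"
  by (induction k) (simp_all add: ell_fac_Suc power_add mult.assoc)

lemma ell_fac_Suc_left: "ell_fac x q p (Suc k) = theta x p * ell_fac (x * q) q p k"
  using ell_fac_add[of x q p 1 k] by (simp add: ell_fac_def)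

lemma ell_fac_shift: "ell_fac x q p k * theta (x * q ^ k) p = theta x p * ell_fac (x * q) q p k"
  using ell_fac_Suc[of x q p k] ell_fac_Suc_left[of x q p k] by simp

lemma ell_fac_eq_0_iff: "ell_fac x q p k = 0 \<longleftrightarrow> (\<exists>i<k. theta (x * q ^ i) p = 0)"
  by (auto simp: ell_fac_def)

lemma ell_fac_nonzeroI: "(\<And>i. i < k \<Longrightarrow> theta (x * q ^ i) p \<noteq> 0) \<Longrightarrow> ell_fac x q p k \<noteq> 0"
  by (auto simp: ell_fac_eq_0_iff)

lemma ell_fac_commute:
  "ell_fac y q p j * ell_fac (y * q ^ j) q p m = ell_fac y q p m * ell_fac (y * q ^ m) q p j"
  using ell_fac_add[of y q p j m] ell_fac_add[of y q p m j] by (simp add: add.commute)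

section \<open>The summation\<close>

lemma mult_power_diff_Suc:
  fixes x :: "'a::monoid_mult"
  assumes "i < k"
  shows "x * x ^ (k - Suc i) * x ^ i = x ^ k"
proof -
  have "Suc (k - Suc i) + i = k" using assms by simp
  then show ?thesis by (metis power_Suc power_add)
qed

lemma prod_remove_split:
  fixes f :: "nat \<Rightarrow> 'a::comm_monoid_mult"
  assumes "k \<le> n"
  shows "(\<Prod>j\<in>{..n}-{k}. f j) = (\<Prod>j<k. f j) * (\<Prod>i<n-k. f (Suc k + i))"
proof -
  have e: "{..n}-{k} = {..<k} \<union> {Suc k..n}" using assms by auto
  have "prod f ({..<k} \<union> {Suc k..n}) = prod f {..<k} * prod f {Suc k..n}"
    by (rule prod.union_disjoint) auto
  then have "(\<Prod>j\<in>{..n}-{k}. f j) = (\<Prod>j<k. f j) * (\<Prod>j\<in>{Suc k..n}. f j)"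
    unfolding e .
  also have "(\<Prod>j\<in>{Suc k..n}. f j) = (\<Prod>i<n-k. f (Suc k + i))"
    by (rule prod.reindex_bij_witness[of _ "\<lambda>i. Suc k + i" "\<lambda>j. j - Suc k"]) (use assms in auto)
  finally show ?thesis .
qed

lemma prod_lessThan_split_rev:
  fixes h :: "nat \<Rightarrow> 'a::comm_monoid_mult"
  assumes "k \<le> n"
  shows "(\<Prod>i<n-k. h (Suc i)) * (\<Prod>i<k. h (n - i)) = (\<Prod>i<n. h (Suc i))"
  using assms
proof (induction k)
  case (Suc k)
  have nk: "n - k = Suc (n - Suc k)" using Suc.prems by simp
  have "(\<Prod>i<n - Suc k. h (Suc i)) * (\<Prod>i<Suc k. h (n - i))
      = ((\<Prod>i<n - Suc k. h (Suc i)) * h (n - k)) * (\<Prod>i<k. h (n - i))"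
    by (simp add: ac_simps)
  also have "(\<Prod>i<n - Suc k. h (Suc i)) * h (n - k) = (\<Prod>i<n - k. h (Suc i))"
  proof -
    have "(\<Prod>i<Suc (n - Suc k). h (Suc i)) = (\<Prod>i<n - Suc k. h (Suc i)) * h (Suc (n - Suc k))"
      by (rule prod.lessThan_Suc)
    then show ?thesis by (simp only: nk[symmetric])
  qed
  finally show ?case using Suc by simp
qed simp

definition vwp_term ::
  "complex \<Rightarrow> complex \<Rightarrow> nat \<Rightarrow> nat \<Rightarrow> (nat \<Rightarrow> complex) \<Rightarrow> (nat \<Rightarrow> nat) \<Rightarrow> complex \<Rightarrow> complex \<Rightarrow> nat \<Rightarrow> complex"
where
  "vwp_term p q r n c m a b j = theta (a * q ^ (2 * j)) p / theta a p
     * (ell_fac a q p j * ell_fac b q p j * ell_fac (a / b) q p j * ell_fac (q powi (- int n)) q p j)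
     / (ell_fac q q p j * ell_fac (a * q / b) q p j * ell_fac (b * q) q p j * ell_fac (a * q ^ (n + 1)) q p j)
     * q ^ j
     * (\<Prod>l\<in>{1..r}. (ell_fac (c l * q ^ m l) q p j * ell_fac (a * q / c l) q p j)
          / (ell_fac (c l) q p j * ell_fac (a * q powi (1 - int (m l)) / c l) q p j))"

definition vwp_closed_form ::
  "complex \<Rightarrow> complex \<Rightarrow> nat \<Rightarrow> nat \<Rightarrow> (nat \<Rightarrow> complex) \<Rightarrow> (nat \<Rightarrow> nat) \<Rightarrow> complex \<Rightarrow> complex \<Rightarrow> complex"
where
  "vwp_closed_form p q r n c m a b =
     (ell_fac q q p n * ell_fac (a * q) q p n) / (ell_fac (a * q / b) q p n * ell_fac (b * q) q p n)
     * (\<Prod>l\<in>{1..r}. (ell_fac (c l / b) q p (m l) * ell_fac (b * c l / a) q p (m l))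
          / (ell_fac (c l) q p (m l) * ell_fac (c l / a) q p (m l)))"

locale vwp_generic = theta_nome +
  fixes q a b :: complex and r n :: nat and c :: "nat \<Rightarrow> complex" and m :: "nat \<Rightarrow> nat"
  assumes q0: "q \<noteq> 0" and a0: "a \<noteq> 0" and b0: "b \<noteq> 0" and c0: "\<And>l. l \<in> {1..r} \<Longrightarrow> c l \<noteq> 0"
    and n_eq_sum: "n = (\<Sum>l\<in>{1..r}. m l)"
    and theta_a_nonzero: "\<And>s. s \<le> 2 * n \<Longrightarrow> theta (a * q ^ s) p \<noteq> 0"
    and theta_q_nonzero: "\<And>d. 1 \<le> d \<Longrightarrow> d \<le> n \<Longrightarrow> theta (q ^ d) p \<noteq> 0"
    and theta_b_nonzero: "\<And>j. j \<le> n \<Longrightarrow> theta (b * q ^ j) p \<noteq> 0 \<and> theta (a * q ^ j / b) p \<noteq> 0"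
    and ell_fac_c_m_nonzero: "\<And>l. l \<in> {1..r} \<Longrightarrow> ell_fac (c l) q p (m l) \<noteq> 0
        \<and> ell_fac (a * q powi (1 - int (m l)) / c l) q p (m l) \<noteq> 0 \<and> ell_fac (c l / a) q p (m l) \<noteq> 0"
    and ell_fac_c_nonzero: "\<And>j l. j \<le> n \<Longrightarrow> l \<in> {1..r} \<Longrightarrow> ell_fac (c l) q p j \<noteq> 0
        \<and> ell_fac (a * q powi (1 - int (m l)) / c l) q p j \<noteq> 0"
begin

abbreviation ef where "ef x k \<equiv> ell_fac x q p k"

definition cdual :: "nat \<Rightarrow> complex" where "cdual l = a * q powi (1 - int (m l)) / c l"

lemma cdual_eq: "cdual l = a * q / (c l * q ^ m l)"
  unfolding cdual_def using q0 by (simp add: power_int_diff power_int_of_nat)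

definition Phi :: "nat \<Rightarrow> complex" where
  "Phi k = (\<Prod>l\<in>{1..r}. ef (c l * q ^ k) (m l) * ef (cdual l * q ^ k) (m l))"

text \<open>\<open>\<theta>(q\<^sup>-\<^sup>d)\<close>, in the form given by \<open>theta_inverse\<close>.\<close>
definition theta_inv_q_power :: "nat \<Rightarrow> complex" where "theta_inv_q_power d = - theta (q ^ d) p / q ^ d"

definition tail_prod :: "nat \<Rightarrow> complex" where "tail_prod k = (\<Prod>i<n-k. theta_inv_q_power (Suc i))"

definition node :: "nat \<Rightarrow> complex" where "node k = (if k \<le> n then q ^ k else b / a)"

definition points :: "(nat \<times> nat) set" where "points = Sigma {1..r} (\<lambda>l. {..<m l})"

definition point :: "nat \<times> nat \<Rightarrow> complex" where "point x = c (fst x) * q ^ snd x"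

definition numer :: "complex \<Rightarrow> complex" where
  "numer w = (\<Prod>x\<in>points. theta (point x * w) p * theta (a * w / point x) p)"

definition interp_term :: "nat \<Rightarrow> complex" where
  "interp_term k = node k * numer (node k) / interp_denom a node {..Suc n} k"

lemma numer_Sigma: "numer w =
  (\<Prod>l\<in>{1..r}. (\<Prod>i<m l. theta (c l * q ^ i * w) p) * (\<Prod>i<m l. theta (a * w / (c l * q ^ i)) p))"
proof -
  have "numer w = (\<Prod>l\<in>{1..r}. \<Prod>i<m l. theta (c l * q ^ i * w) p * theta (a * w / (c l * q ^ i)) p)"
    unfolding numer_def points_def point_def by (subst prod.Sigma) (auto simp: case_prod_unfold)
  then show ?thesis by (simp add: prod.distrib)
qed

lemma ell_fac_cdual_shift: "ef (cdual l * q ^ k) (m l)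
    = (\<Prod>i<m l. theta (a * q ^ k / (c l * q ^ i)) p)"
proof -
  have "ef (cdual l * q ^ k) (m l) = (\<Prod>i<m l. theta (cdual l * q ^ k * q ^ (m l - Suc i)) p)"
    unfolding ell_fac_def by (rule prod.nat_diff_reindex[symmetric])
  also have "\<dots> = (\<Prod>i<m l. theta (a * q ^ k / (c l * q ^ i)) p)"
  proof (rule prod.cong[OF refl])
    fix i assume "i \<in> {..<m l}"
    then have e: "q ^ m l = q * q ^ (m l - Suc i) * q ^ i"
      by (intro mult_power_diff_Suc[symmetric]) auto
    have "cdual l * q ^ k * q ^ (m l - Suc i)
        = a * q * q ^ k * q ^ (m l - Suc i) / (c l * (q * q ^ (m l - Suc i) * q ^ i))"
      unfolding cdual_eq by (subst e) simp
    also have "\<dots> = a * q ^ k / (c l * q ^ i)"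
      using q0 by (cases "c l = 0") (simp_all add: field_simps)
    finally have "cdual l * q ^ k * q ^ (m l - Suc i) = a * q ^ k / (c l * q ^ i)" .
    then show "theta (cdual l * q ^ k * q ^ (m l - Suc i)) p = theta (a * q ^ k / (c l * q ^ i)) p"
      by simp
  qed
  finally show ?thesis .
qed

lemma numer_node: "numer (q ^ k) = Phi k"
  unfolding numer_Sigma Phi_def ell_fac_cdual_shift
  by (intro prod.cong refl arg_cong2[where f = "(*)"]) (simp_all add: ell_fac_def ac_simps)


lemma prod_theta_node_ratios:
  assumes k: "k \<le> n"
  shows "(\<Prod>j\<in>{..n}-{k}. theta (q ^ k / q ^ j) p) = ef q k * tail_prod k"
proof -
  have "(\<Prod>j\<in>{..n}-{k}. theta (q ^ k / q ^ j) p)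
      = (\<Prod>j<k. theta (q ^ k / q ^ j) p) * (\<Prod>i<n-k. theta (q ^ k / q ^ (Suc k + i)) p)"
    by (rule prod_remove_split[OF k])
  also have "(\<Prod>j<k. theta (q ^ k / q ^ j) p) = ef q k"
  proof -
    have "(\<Prod>j<k. theta (q ^ k / q ^ j) p) = (\<Prod>i<k. theta (q ^ k / q ^ (k - Suc i)) p)"
      by (rule prod.nat_diff_reindex[symmetric])
    also have "\<dots> = (\<Prod>i<k. theta (q * q ^ i) p)"
    proof (rule prod.cong[OF refl])
      fix i assume "i \<in> {..<k}"
      then have "q * q ^ (k - Suc i) * q ^ i = q ^ k" by (intro mult_power_diff_Suc) auto
      then have "q ^ k / q ^ (k - Suc i) = q * q ^ i" using q0 by (simp add: field_simps)
      then show "theta (q ^ k / q ^ (k - Suc i)) p = theta (q * q ^ i) p" by simp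
    qed
    finally show ?thesis by (simp add: ell_fac_def)
  qed
  also have "(\<Prod>i<n-k. theta (q ^ k / q ^ (Suc k + i)) p) = tail_prod k"
    unfolding tail_prod_def
  proof (rule prod.cong[OF refl])
    fix i
    have "q ^ k / q ^ (Suc k + i) = 1 / q ^ Suc i" using q0 by (simp add: power_add field_simps)
    then show "theta (q ^ k / q ^ (Suc k + i)) p = theta_inv_q_power (Suc i)"
      unfolding theta_inv_q_power_def using theta_inverse[of "q ^ Suc i"] q0 by simp
  qed
  finally show ?thesis .
qed

lemma prod_theta_node_products:
  assumes k: "k \<le> n"
  shows "(\<Prod>j\<in>{..n}-{k}. theta (a * q ^ k * q ^ j) p)
      = ef (a * q ^ k) k * ef (a * q ^ (2 * k + 1)) (n - k)"
proof -
  have "(\<Prod>j\<in>{..n}-{k}. theta (a * q ^ k * q ^ j) p)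
      = (\<Prod>j<k. theta (a * q ^ k * q ^ j) p) * (\<Prod>i<n-k. theta (a * q ^ k * q ^ (Suc k + i)) p)"
    by (rule prod_remove_split[OF k])
  also have "(\<Prod>i<n-k. theta (a * q ^ k * q ^ (Suc k + i)) p) = ef (a * q ^ (2 * k + 1)) (n - k)"
    unfolding ell_fac_def
  proof (intro prod.cong refl)
    fix i
    have e: "k + (Suc k + i) = 2 * k + 1 + i" by simp
    have "a * q ^ k * q ^ (Suc k + i) = a * q ^ (2 * k + 1) * q ^ i"
      by (simp only: mult.assoc power_add[symmetric] e)
    then show "theta (a * q ^ k * q ^ (Suc k + i)) p = theta (a * q ^ (2 * k + 1) * q ^ i) p"
      by (simp only:)
  qed
  finally show ?thesis by (simp add: ell_fac_def)
qed

lemma interp_denom_node: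
  assumes k: "k \<le> n"
  shows "interp_denom a node {..Suc n} k
    = ef q k * tail_prod k * ef (a * q ^ k) k * ef (a * q ^ (2 * k + 1)) (n - k)
           * theta (a * q ^ k / b) p * theta (b * q ^ k) p"
proof -
  have S: "{..Suc n} - {k} = insert (Suc n) ({..n} - {k})" using k by auto
  have "interp_denom a node {..Suc n} k
      = theta (node k / node (Suc n)) p * theta (a * node k * node (Suc n)) p
          * (\<Prod>j\<in>{..n}-{k}. theta (node k / node j) p * theta (a * node k * node j) p)"
    unfolding interp_denom_def S by (subst prod.insert) auto
  also have "theta (node k / node (Suc n)) p * theta (a * node k * node (Suc n)) p
      = theta (a * q ^ k / b) p * theta (b * q ^ k) p"
    unfolding node_def using k a0 b0 by (simp add: field_simps)
  also have "(\<Prod>j\<in>{..n}-{k}. theta (node k / node j) p * theta (a * node k * node j) p)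
        = (\<Prod>j\<in>{..n}-{k}. theta (q ^ k / q ^ j) p) * (\<Prod>j\<in>{..n}-{k}. theta (a * q ^ k * q ^ j) p)"
    unfolding prod.distrib[symmetric] using k by (intro prod.cong) (auto simp: node_def)
  also have "(\<Prod>j\<in>{..n}-{k}. theta (q ^ k / q ^ j) p) = ef q k * tail_prod k"
    by (rule prod_theta_node_ratios[OF k])
  also have "(\<Prod>j\<in>{..n}-{k}. theta (a * q ^ k * q ^ j) p)
      = ef (a * q ^ k) k * ef (a * q ^ (2 * k + 1)) (n - k)"
    by (rule prod_theta_node_products[OF k])
  finally show ?thesis by (simp add: ac_simps)
qed

lemma ell_fac_a_split:
  assumes k: "k \<le> n"
  shows "theta (a * q ^ (2 * k)) p * ef a k * (ef (a * q ^ k) k * ef (a * q ^ (2 * k + 1)) (n - k))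
       = ef a (Suc n) * ef (a * q ^ (n + 1)) k"
proof -
  have "ef a k * ef (a * q ^ k) k = ef a (2 * k)" unfolding mult_2 by (simp add: ell_fac_add)
  then have "theta (a * q ^ (2 * k)) p * ef a k * ef (a * q ^ k) k = ef a (Suc (2 * k))"
    unfolding ell_fac_Suc[of a q p "2 * k"] by (simp add: mult.commute mult.left_commute)
  have e3: "ef a (Suc (2 * k) + (n - k)) = ef a (Suc (2 * k)) * ef (a * q ^ (2 * k + 1)) (n - k)"
    using ell_fac_add[of a q p "Suc (2 * k)" "n - k"] by simp
  have "theta (a * q ^ (2 * k)) p * ef a k * (ef (a * q ^ k) k * ef (a * q ^ (2 * k + 1)) (n - k))
       = (theta (a * q ^ (2 * k)) p * ef a k * ef (a * q ^ k) k) * ef (a * q ^ (2 * k + 1)) (n - k)"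
    by (simp only: mult.assoc)
  then have "theta (a * q ^ (2 * k)) p * ef a k * (ef (a * q ^ k) k * ef (a * q ^ (2 * k + 1)) (n - k))
       = ef a (Suc (2 * k) + (n - k))"
    unfolding e3 using \<open>theta (a * q ^ (2 * k)) p * ef a k * ef (a * q ^ k) k = ef a (Suc (2 * k))\<close> by simp
  also have "Suc (2 * k) + (n - k) = Suc n + k" using k by simp
  also have "ef a (Suc n + k) = ef a (Suc n) * ef (a * q ^ (n + 1)) k"
    using ell_fac_add[of a q p "Suc n" k] by simp
  finally show ?thesis .
qed

lemma ell_fac_q_neg_n_split:
  assumes k: "k \<le> n"
  shows "ef (q powi (- int n)) k * tail_prod k = tail_prod 0"
proof -
  have "ef (q powi (- int n)) k = (\<Prod>i<k. theta_inv_q_power (n - i))"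
    unfolding ell_fac_def
  proof (rule prod.cong[OF refl])
    fix i assume "i \<in> {..<k}"
    then have i: "i \<le> n" using k by simp
    have "q ^ n = q ^ (n - i) * q ^ i" using i by (simp add: power_add[symmetric])
    then have "q powi (- int n) * q ^ i = 1 / q ^ (n - i)" using q0
      by (simp add: power_int_minus power_int_of_nat field_simps)
    then show "theta (q powi (- int n) * q ^ i) p = theta_inv_q_power (n - i)"
      unfolding theta_inv_q_power_def using theta_inverse[of "q ^ (n - i)"] q0 by simp
  qed
  then show ?thesis
    unfolding tail_prod_def using prod_lessThan_split_rev[OF k, of theta_inv_q_power] by (simp add: ac_simps)
qed

lemma c_factor_eq_Phi_ratio:
  assumes j: "j \<le> n" and l: "l \<in> {1..r}"
  shows "(ef (c l * q ^ m l) j * ef (a * q / c l) j) / (ef (c l) j * ef (a * q powi (1 - int (m l)) / c l) j)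
       = (ef (c l * q ^ j) (m l) * ef (cdual l * q ^ j) (m l)) / (ef (c l) (m l) * ef (cdual l) (m l))"
proof -
  have s1: "ef (c l) j * ef (c l * q ^ j) (m l) = ef (c l) (m l) * ef (c l * q ^ m l) j"
    by (rule ell_fac_commute)
  have s2: "ef (cdual l) j * ef (cdual l * q ^ j) (m l)
      = ef (cdual l) (m l) * ef (cdual l * q ^ m l) j"
    by (rule ell_fac_commute)
  have ym: "cdual l * q ^ m l = a * q / c l" unfolding cdual_eq using q0 by (simp add: field_simps)
  have n1: "ef (c l) j \<noteq> 0" "ef (cdual l) j \<noteq> 0"
    using ell_fac_c_nonzero[OF j l] by (auto simp: cdual_def)
  have n2: "ef (c l) (m l) \<noteq> 0" "ef (cdual l) (m l) \<noteq> 0"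
    using ell_fac_c_m_nonzero[OF l] by (auto simp: cdual_def)
  have e1: "ef (c l * q ^ m l) j = ef (c l) j * ef (c l * q ^ j) (m l) / ef (c l) (m l)"
    using s1 n2 by (simp add: field_simps)
  have e2: "ef (a * q / c l) j = ef (cdual l) j * ef (cdual l * q ^ j) (m l) / ef (cdual l) (m l)"
    using s2 n2 unfolding ym by (simp add: field_simps)
  have fold: "a * q powi (1 - int (m l)) / c l = cdual l" by (simp add: cdual_def)
  show ?thesis unfolding fold e1 e2 using n1 n2 by (simp add: field_simps)
qed


lemma theta_nodes_nonzero:
  "\<forall>k\<in>{..Suc n}. \<forall>j\<in>{..Suc n}. j \<noteq> k \<longrightarrow> theta (node k / node j) p \<noteq> 0 \<and> theta (a * node k * node j) p \<noteq> 0"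
proof (intro ballI impI)
  fix k j assume k: "k \<in> {..Suc n}" and j: "j \<in> {..Suc n}" and jk: "j \<noteq> k"
  show "theta (node k / node j) p \<noteq> 0 \<and> theta (a * node k * node j) p \<noteq> 0"
  proof (cases "k \<le> n")
    case kn: True
    show ?thesis
    proof (cases "j \<le> n")
      case jn: True
      have A: "theta (q ^ k / q ^ j) p \<noteq> 0"
      proof (cases "j < k")
        case True
        then have "q ^ k / q ^ j = q ^ (k - j)" using q0 by (simp add: power_diff)
        then show ?thesis using theta_q_nonzero[of "k - j"] True kn by simp
      next
        case False
        then have kj: "k < j" using jk by simp
        then have "q ^ k / q ^ j = 1 / q ^ (j - k)"
          using q0 by (simp add: power_diff_conv_inverse field_simps)
        then show ?thesis using theta_inverse[of "q ^ (j - k)"] theta_q_nonzero[of "j - k"] kj jn q0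
          by simp
      qed
      have B: "theta (a * q ^ k * q ^ j) p \<noteq> 0" using theta_a_nonzero[of "k + j"] kn jn
        by (simp add: power_add mult.assoc)
      show ?thesis using A B kn jn by (simp add: node_def)
    next
      case False
      then have jS: "j = Suc n" using j by simp
      have "node k / node j = a * q ^ k / b" "a * node k * node j = b * q ^ k"
        unfolding node_def jS using kn a0 b0 by (simp_all add: field_simps)
      then show ?thesis using theta_b_nonzero[OF kn] by simp
    qed
  next
    case False
    then have kS: "k = Suc n" using k by simp
    then have jn: "j \<le> n" using j jk by auto
    have "node k / node j = 1 / (a * q ^ j / b)" "a * node k * node j = b * q ^ j"
      unfolding node_def kS using jn a0 b0 q0 by (simp_all add: field_simps)
    then show ?thesis using theta_b_nonzero[OF jn] theta_inverse[of "a * q ^ j / b"] a0 b0 q0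
      by simp
  qed
qed

lemma card_points: "card points = n"
  unfolding points_def n_eq_sum by simp

lemma interp_terms_sum_eq_0: "(\<Sum>k\<in>{..Suc n}. interp_term k) = 0"
proof -
  have "(\<Sum>k\<in>{..Suc n}. node k * (\<Prod>i\<in>points. theta (point i * node k) p * theta (a * node k / point i) p)
      / interp_denom a node {..Suc n} k) = 0"
  proof (rule theta_interpolation_sum_eq_0)
    show "finite points" unfolding points_def by simp
    show "card {..Suc n} = card points + 2" using card_points by simp
    show "\<forall>k\<in>{..Suc n}. node k \<noteq> 0" using q0 a0 b0 by (simp add: node_def)
    show "\<forall>i\<in>points. point i \<noteq> 0" using q0 c0 by (auto simp: points_def point_def)
  qed (use a0 theta_nodes_nonzero in auto)
  then show ?thesis unfolding interp_term_def numer_def .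
qed


definition scale :: complex where
  "scale = ef a (Suc n) * tail_prod 0 * theta b p * theta (a / b) p / (theta a p * Phi 0)"

lemma Phi_0_nonzero: "Phi 0 \<noteq> 0"
  unfolding Phi_def using ell_fac_c_m_nonzero by (auto simp: prod_zero_iff cdual_def)

lemma tail_prod_nonzero: "tail_prod k \<noteq> 0"
proof -
  have "- theta (q ^ Suc i) p / q ^ Suc i \<noteq> 0" if "i \<in> {..<n - k}" for i
    using theta_q_nonzero[of "Suc i"] q0 that by simp
  then show ?thesis unfolding tail_prod_def theta_inv_q_power_def by (simp add: prod_zero_iff)
qed

lemma ell_fac_a_nonzero: "s + k \<le> Suc (2 * n) \<Longrightarrow> ef (a * q ^ s) k \<noteq> 0"
  by (rule ell_fac_nonzeroI) (use theta_a_nonzero in \<open>auto simp: mult.assoc power_add[symmetric]\<close>)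

lemma ell_fac_q_nonzero: "k \<le> n \<Longrightarrow> ef q k \<noteq> 0"
  by (rule ell_fac_nonzeroI) (use theta_q_nonzero in \<open>auto simp flip: power_Suc\<close>)

lemma ell_fac_b_nonzero:
  assumes "k \<le> n"
  shows "ef (b * q) k \<noteq> 0" and "ef (a * q / b) k \<noteq> 0"
proof -
  have "theta (b * q ^ Suc i) p \<noteq> 0" "theta (a * q ^ Suc i / b) p \<noteq> 0" if "i < k" for i
    using theta_b_nonzero[of "Suc i"] that assms by auto
  then show "ef (b * q) k \<noteq> 0" "ef (a * q / b) k \<noteq> 0"
    by (auto intro!: ell_fac_nonzeroI simp: mult.assoc)
qed

lemma vwp_term_eq_scale_mult:
  assumes j: "j \<le> n"
  shows "vwp_term p q r n c m a b j = scale * interp_term j"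
proof -
  have R: "(\<Prod>l\<in>{1..r}. (ef (c l * q ^ m l) j * ef (a * q / c l) j)
                 / (ef (c l) j * ef (a * q powi (1 - int (m l)) / c l) j)) = Phi j / Phi 0"
  proof -
    have "(\<Prod>l\<in>{1..r}. (ef (c l * q ^ m l) j * ef (a * q / c l) j)
                 / (ef (c l) j * ef (a * q powi (1 - int (m l)) / c l) j))
        = (\<Prod>l\<in>{1..r}. (ef (c l * q ^ j) (m l) * ef (cdual l * q ^ j) (m l)) / (ef (c l) (m l) * ef (cdual l) (m l)))"
      by (intro prod.cong refl c_factor_eq_Phi_ratio j) auto
    also have "\<dots> = Phi j / Phi 0" unfolding prod_dividef Phi_def by simp
    finally show ?thesis .
  qed
  have T: "interp_term j
      = q ^ j * Phi j / (ef q j * tail_prod j * ef (a * q ^ j) j * ef (a * q ^ (2 * j + 1)) (n - j)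
           * theta (a * q ^ j / b) p * theta (b * q ^ j) p)"
    unfolding interp_term_def interp_denom_node[OF j] using j by (simp add: node_def numer_node)
  have A0: "ef a j \<noteq> 0" using ell_fac_a_nonzero[of 0 j] j by simp
  have U10: "ef (a * q ^ j) j \<noteq> 0" and U20: "ef (a * q ^ (2 * j + 1)) (n - j) \<noteq> 0"
    and H0: "ef (a * q ^ (n + 1)) j \<noteq> 0"
    using j ell_fac_a_nonzero[of j j] ell_fac_a_nonzero[of "2 * j + 1" "n - j"]
      ell_fac_a_nonzero[of "n + 1" j]
    by simp_all
  have E10: "ef q j \<noteq> 0" and F0: "ef (a * q / b) j \<noteq> 0" and G0: "ef (b * q) j \<noteq> 0"
    using j by (simp_all add: ell_fac_q_nonzero ell_fac_b_nonzero)
  have ta: "theta a p \<noteq> 0" using theta_a_nonzero[of 0] by simp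
  have tb: "theta (b * q ^ j) p \<noteq> 0" and tab: "theta (a * q ^ j / b) p \<noteq> 0"
    using theta_b_nonzero[OF j] by auto
  have eX: "theta (a * q ^ (2 * j)) p
      = ef a (Suc n) * ef (a * q ^ (n + 1)) j / (ef a j * (ef (a * q ^ j) j * ef (a * q ^ (2 * j + 1)) (n - j)))"
    using ell_fac_a_split[OF j] A0 U10 U20 by (simp add: field_simps)
  have eD: "ef (q powi (- int n)) j = tail_prod 0 / tail_prod j"
    using ell_fac_q_neg_n_split[OF j] tail_prod_nonzero by (simp add: field_simps)
  have eB: "ef b j = theta b p * ef (b * q) j / theta (b * q ^ j) p"
    using ell_fac_shift[of b q p j] tb by (simp add: field_simps)
  have eC: "ef (a / b) j = theta (a / b) p * ef (a * q / b) j / theta (a * q ^ j / b) p"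
    using ell_fac_shift[of "a / b" q p j] tab by (simp add: field_simps)
  \<comment> \<open>a pure field identity, stated for opaque variables to keep \<open>field_simps\<close> fast\<close>
  have field_identity: "X / ta * (A * Bb * C * Dq) / (E1 * F * G * H) * qj * (Pj / P0)
       = (An * Q0 * thb * thab / (ta * P0)) * (qj * Pj / (E1 * Bj * U1 * U2 * tab * tb))"
    if "X = An * H / (A * (U1 * U2))" "Dq = Q0 / Bj" "Bb = thb * G / tb" "C = thab * F / tab"
      "ta \<noteq> 0" "E1 \<noteq> 0" "F \<noteq> 0" "G \<noteq> 0" "H \<noteq> 0" "Bj \<noteq> 0" "U1 \<noteq> 0" "U2 \<noteq> 0"
      "tab \<noteq> 0" "tb \<noteq> 0" "P0 \<noteq> 0" "A \<noteq> 0"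
    for X A U1 U2 An H Dq Bj Q0 Bb tb thb G C tab thab F ta E1 qj Pj P0 :: complex
    using that(5-) unfolding that(1-4) by (simp add: field_simps)
  show ?thesis
    unfolding vwp_term_def R T scale_def
    by (rule field_identity[OF eX eD eB eC ta E10 F0 G0 H0 tail_prod_nonzero U10 U20 tab tb
          Phi_0_nonzero A0])
qed

text \<open>Scalar factors collected when \<open>theta_inverse\<close> turns \<open>\<theta>(1/x)\<close> into \<open>-\<theta>(x)/x\<close>.\<close>
definition inv_factor_b :: "nat \<Rightarrow> complex" where "inv_factor_b l = (\<Prod>i<m l. - (b / (c l * q ^ i)))"
definition inv_factor_a :: "nat \<Rightarrow> complex" where "inv_factor_a l = (\<Prod>i<m l. - (a / (c l * q ^ i)))"
definition inv_factor_q :: complex where "inv_factor_q = (\<Prod>i<n. - (1 / q ^ Suc i))"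
definition inv_factor_ab :: complex where "inv_factor_ab = (\<Prod>j<Suc n. - (b / (a * q ^ j)))"

lemma interp_denom_last_node: "interp_denom a node {..Suc n} (Suc n)
    = ef (a / b) (Suc n) * ef b (Suc n) * inv_factor_ab"
proof -
  have S: "{..Suc n} - {Suc n} = {..<Suc n}" by auto
  have "interp_denom a node {..Suc n} (Suc n)
      = (\<Prod>j<Suc n. theta (a / b * q ^ j) p * theta (b * q ^ j) p * - (b / (a * q ^ j)))"
    unfolding interp_denom_def S
  proof (rule prod.cong[OF refl])
    fix j assume "j \<in> {..<Suc n}"
    then have j: "j \<le> n" by simp
    have e1: "node (Suc n) / node j = 1 / (a / b * q ^ j)"
      unfolding node_def using j a0 b0 q0 by (simp add: field_simps)
    have e2: "a * node (Suc n) * node j = b * q ^ j" unfolding node_def using j a0 by simp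
    have "theta (1 / (a / b * q ^ j)) p = theta (a / b * q ^ j) p * - (b / (a * q ^ j))"
      using theta_inverse[of "a / b * q ^ j"] a0 b0 q0 by (simp add: field_simps)
    then show "theta (node (Suc n) / node j) p * theta (a * node (Suc n) * node j) p
        = theta (a / b * q ^ j) p * theta (b * q ^ j) p * - (b / (a * q ^ j))"
      unfolding e1 e2 by (simp add: ac_simps)
  qed
  also have "\<dots> = ef (a / b) (Suc n) * ef b (Suc n) * inv_factor_ab"
    unfolding inv_factor_ab_def ell_fac_def prod.distrib by simp
  finally show ?thesis .
qed

lemma numer_last_node: "numer (b / a) = (\<Prod>l\<in>{1..r}. ef (b * c l / a) (m l) * ef (c l / b) (m l) * inv_factor_b l)"
  unfolding numer_Sigma
proof (rule prod.cong[OF refl])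
  fix l assume l: "l \<in> {1..r}"
  have cl: "c l \<noteq> 0" using c0 l by simp
  have 1: "(\<Prod>i<m l. theta (c l * q ^ i * (b / a)) p) = ef (b * c l / a) (m l)"
    unfolding ell_fac_def by (intro prod.cong refl) (simp add: ac_simps)
  have 2: "(\<Prod>i<m l. theta (a * (b / a) / (c l * q ^ i)) p) = ef (c l / b) (m l) * inv_factor_b l"
  proof -
    have "(\<Prod>i<m l. theta (a * (b / a) / (c l * q ^ i)) p)
        = (\<Prod>i<m l. theta (c l / b * q ^ i) p * - (b / (c l * q ^ i)))"
    proof (rule prod.cong[OF refl])
      fix i
      have e: "a * (b / a) / (c l * q ^ i) = 1 / (c l / b * q ^ i)"
        using a0 b0 cl q0 by (simp add: field_simps)
      show "theta (a * (b / a) / (c l * q ^ i)) p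
          = theta (c l / b * q ^ i) p * - (b / (c l * q ^ i))"
        unfolding e using theta_inverse[of "c l / b * q ^ i"] b0 cl q0 by (simp add: field_simps)
    qed
    then show ?thesis unfolding inv_factor_b_def ell_fac_def prod.distrib by simp
  qed
  show "(\<Prod>i<m l. theta (c l * q ^ i * (b / a)) p) * (\<Prod>i<m l. theta (a * (b / a) / (c l * q ^ i)) p)
      = ef (b * c l / a) (m l) * ef (c l / b) (m l) * inv_factor_b l"
    unfolding 1 2 by (simp add: ac_simps)
qed

lemma Phi_0_eq: "Phi 0 = (\<Prod>l\<in>{1..r}. ef (c l) (m l) * (ef (c l / a) (m l) * inv_factor_a l))"
  unfolding Phi_def
proof (rule prod.cong[OF refl])
  fix l assume l: "l \<in> {1..r}"
  have cl: "c l \<noteq> 0" using c0 l by simp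
  have "ef (cdual l * q ^ 0) (m l) = (\<Prod>i<m l. theta (c l / a * q ^ i) p * - (a / (c l * q ^ i)))"
    unfolding ell_fac_cdual_shift
  proof (rule prod.cong[OF refl])
    fix i
    have e: "a * q ^ 0 / (c l * q ^ i) = 1 / (c l / a * q ^ i)"
      using a0 cl q0 by (simp add: field_simps)
    show "theta (a * q ^ 0 / (c l * q ^ i)) p = theta (c l / a * q ^ i) p * - (a / (c l * q ^ i))"
      unfolding e using theta_inverse[of "c l / a * q ^ i"] a0 cl q0 by (simp add: field_simps)
  qed
  also have "\<dots> = ef (c l / a) (m l) * inv_factor_a l"
    unfolding inv_factor_a_def ell_fac_def prod.distrib by simp
  finally show "ef (c l * q ^ 0) (m l) * ef (cdual l * q ^ 0) (m l)
      = ef (c l) (m l) * (ef (c l / a) (m l) * inv_factor_a l)"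
    by simp
qed

lemma tail_prod_0_eq: "tail_prod 0 = ef q n * inv_factor_q"
proof -
  have "tail_prod 0 = (\<Prod>i<n. theta (q * q ^ i) p * - (1 / q ^ Suc i))"
    unfolding tail_prod_def theta_inv_q_power_def
  proof (intro prod.cong)
    fix x
    have e: "q ^ Suc x = q * q ^ x" by (rule power_Suc)
    show "- theta (q ^ Suc x) p / q ^ Suc x = theta (q * q ^ x) p * - (1 / q ^ Suc x)"
      unfolding e by simp
  qed simp
  then show ?thesis unfolding inv_factor_q_def ell_fac_def prod.distrib by simp
qed

lemma inv_factor_ab_eq: "inv_factor_ab = - (b / a) * (b / a) ^ n * inv_factor_q"
proof -
  have "inv_factor_ab = - (b / (a * q ^ 0)) * (\<Prod>i<n. - (b / (a * q ^ Suc i)))"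
    unfolding inv_factor_ab_def by (rule prod.lessThan_Suc_shift)
  also have "(\<Prod>i<n. - (b / (a * q ^ Suc i))) = (\<Prod>i<n. (b / a) * - (1 / q ^ Suc i))"
    by (intro prod.cong refl) (simp add: field_simps)
  also have "\<dots> = (b / a) ^ n * inv_factor_q" unfolding inv_factor_q_def prod.distrib by simp
  finally show ?thesis by simp
qed

lemma inv_factors_b_a: "(\<Prod>l\<in>{1..r}. inv_factor_b l) = (b / a) ^ n * (\<Prod>l\<in>{1..r}. inv_factor_a l)"
proof -
  have "inv_factor_b l = (b / a) ^ m l * inv_factor_a l" if l: "l \<in> {1..r}" for l
  proof -
    have cl: "c l \<noteq> 0" using c0 l by simp
    have "inv_factor_b l = (\<Prod>i<m l. (b / a) * - (a / (c l * q ^ i)))"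
      unfolding inv_factor_b_def by (intro prod.cong refl) (use a0 cl q0 in \<open>simp add: field_simps\<close>)
    then show ?thesis unfolding inv_factor_a_def prod.distrib by simp
  qed
  then have "(\<Prod>l\<in>{1..r}. inv_factor_b l) = (\<Prod>l\<in>{1..r}. (b / a) ^ m l * inv_factor_a l)"
    by (rule prod.cong[OF refl])
  also have "\<dots> = (b / a) ^ n * (\<Prod>l\<in>{1..r}. inv_factor_a l)"
    unfolding prod.distrib n_eq_sum by (simp add: power_sum)
  finally show ?thesis .
qed

lemma vwp_closed_form_eq: "vwp_closed_form p q r n c m a b = - scale * interp_term (Suc n)"
proof -
  have interp_term: "interp_term (Suc n)
      = (b / a) * (\<Prod>l\<in>{1..r}. ef (b * c l / a) (m l) * ef (c l / b) (m l) * inv_factor_b l)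
      / (ef (a / b) (Suc n) * ef b (Suc n) * inv_factor_ab)"
    unfolding interp_term_def interp_denom_last_node by (simp add: node_def numer_last_node)
  have P1: "(\<Prod>l\<in>{1..r}. ef (b * c l / a) (m l) * ef (c l / b) (m l) * inv_factor_b l)
      = (\<Prod>l\<in>{1..r}. ef (b * c l / a) (m l)) * ((\<Prod>l\<in>{1..r}. ef (c l / b) (m l)) * (\<Prod>l\<in>{1..r}. inv_factor_b l))"
    by (simp add: prod.distrib ac_simps)
  have P2: "(\<Prod>l\<in>{1..r}. ef (c l) (m l) * (ef (c l / a) (m l) * inv_factor_a l))
      = (\<Prod>l\<in>{1..r}. ef (c l) (m l)) * ((\<Prod>l\<in>{1..r}. ef (c l / a) (m l)) * (\<Prod>l\<in>{1..r}. inv_factor_a l))"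
    by (simp add: prod.distrib)
  have P3: "(\<Prod>l\<in>{1..r}. (ef (c l / b) (m l) * ef (b * c l / a) (m l)) / (ef (c l) (m l) * ef (c l / a) (m l)))
      = ((\<Prod>l\<in>{1..r}. ef (c l / b) (m l)) * (\<Prod>l\<in>{1..r}. ef (b * c l / a) (m l)))
        / ((\<Prod>l\<in>{1..r}. ef (c l) (m l)) * (\<Prod>l\<in>{1..r}. ef (c l / a) (m l)))"
    by (simp add: prod_dividef prod.distrib)
  have sA: "ef a (Suc n) = theta a p * ef (a * q) n" by (rule ell_fac_Suc_left)
  have sB: "ef b (Suc n) = theta b p * ef (b * q) n" by (rule ell_fac_Suc_left)
  have sAB: "ef (a / b) (Suc n) = theta (a / b) p * ef (a * q / b) n" using ell_fac_Suc_left[of "a / b" q p n]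
    by simp
  have ta: "theta a p \<noteq> 0" using theta_a_nonzero[of 0] by simp
  have tb: "theta b p \<noteq> 0" and tab: "theta (a / b) p \<noteq> 0" using theta_b_nonzero[of 0] by auto
  have Fn: "ef (a * q / b) n \<noteq> 0" and Gn: "ef (b * q) n \<noteq> 0"
    using ell_fac_b_nonzero by simp_all
  have PCC: "(\<Prod>l\<in>{1..r}. ef (c l) (m l)) \<noteq> 0" and PCA: "(\<Prod>l\<in>{1..r}. ef (c l / a) (m l)) \<noteq> 0"
    using ell_fac_c_m_nonzero by (auto simp: prod_zero_iff)
  have PNa: "(\<Prod>l\<in>{1..r}. inv_factor_a l) \<noteq> 0"
    unfolding inv_factor_a_def using a0 q0 c0 by (auto simp: prod_zero_iff)
  have Qs0: "inv_factor_q \<noteq> 0" unfolding inv_factor_q_def using q0 by (auto simp: prod_zero_iff)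
  have field_identity: "(Eq * Aq) / (Fn * Gn) * ((PCB * PBCA) / (PCC * PCA))
    = - (ta * Aq * (Eq * Qs) * tb * tab / (ta * (PCC * (PCA * PNa))))
      * (ba * (PBCA * (PCB * PNb)) / ((tab * Fn) * (tb * Gn) * SJ))"
    if "PNb = w * PNa" "SJ = - ba * w * Qs"
      "ta \<noteq> 0" "tb \<noteq> 0" "tab \<noteq> 0" "Fn \<noteq> 0" "Gn \<noteq> 0" "PCC \<noteq> 0" "PCA \<noteq> 0" "PNa \<noteq> 0"
      "Qs \<noteq> 0" "ba \<noteq> 0" "w \<noteq> 0"
    for Eq Aq Fn Gn PCB PBCA PCC PCA PNb PNa ta tb tab Qs SJ ba w :: complex
    using that(3-) unfolding that(1,2) by (simp add: field_simps)
  show ?thesis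
    unfolding vwp_closed_form_def scale_def interp_term Phi_0_eq tail_prod_0_eq sA sB sAB P1 P2 P3
    by (rule field_identity[OF inv_factors_b_a inv_factor_ab_eq ta tb tab Fn Gn PCC PCA PNa Qs0])
      (use a0 b0 in auto)
qed

lemma vwp_sum_eq_closed_form:
  "(\<Sum>j\<le>n. vwp_term p q r n c m a b j) = vwp_closed_form p q r n c m a b"
proof -
  have "(\<Sum>k\<in>{..Suc n}. interp_term k) = (\<Sum>k\<le>n. interp_term k) + interp_term (Suc n)" by simp
  then have s: "(\<Sum>k\<le>n. interp_term k) = - interp_term (Suc n)"
    using interp_terms_sum_eq_0 by (simp add: eq_neg_iff_add_eq_0)
  have "(\<Sum>j\<le>n. vwp_term p q r n c m a b j) = (\<Sum>j\<le>n. scale * interp_term j)"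
    by (intro sum.cong refl vwp_term_eq_scale_mult) auto
  also have "\<dots> = scale * (- interp_term (Suc n))" unfolding sum_distrib_left[symmetric] s ..
  also have "\<dots> = vwp_closed_form p q r n c m a b" using vwp_closed_form_eq by simp
  finally show ?thesis .
qed

end

context theta_nome
begin

lemma tendsto_ell_fac [tendsto_intros]:
  assumes "(f \<longlongrightarrow> x) F" "x \<noteq> 0" "q \<noteq> 0"
  shows "((\<lambda>t. ell_fac (f t) q p k) \<longlongrightarrow> ell_fac x q p k) F"
  unfolding ell_fac_def using assms by (intro tendsto_prod tendsto_theta tendsto_mult tendsto_const) auto

lemma tendsto_vwp_term:
  assumes "(A \<longlongrightarrow> a) F" "(B \<longlongrightarrow> b) F"
    and "a \<noteq> 0" "b \<noteq> 0" "q \<noteq> 0" "\<And>l. l \<in> {1..r} \<Longrightarrow> c l \<noteq> 0" "theta a p \<noteq> 0"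
    and "ell_fac q q p j * ell_fac (a * q / b) q p j * ell_fac (b * q) q p j
           * ell_fac (a * q ^ (n + 1)) q p j \<noteq> 0"
    and "\<And>l. l \<in> {1..r} \<Longrightarrow> ell_fac (c l) q p j * ell_fac (a * q powi (1 - int (m l)) / c l) q p j \<noteq> 0"
  shows "((\<lambda>t. vwp_term p q r n c m (A t) (B t) j) \<longlongrightarrow> vwp_term p q r n c m a b j) F"
  unfolding vwp_term_def using assms
  by (intro tendsto_intros tendsto_prod ballI) auto

lemma tendsto_vwp_closed_form:
  assumes "(A \<longlongrightarrow> a) F" "(B \<longlongrightarrow> b) F"
    and "a \<noteq> 0" "b \<noteq> 0" "q \<noteq> 0" "\<And>l. l \<in> {1..r} \<Longrightarrow> c l \<noteq> 0"
    and "ell_fac (a * q / b) q p n * ell_fac (b * q) q p n \<noteq> 0"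
    and "\<And>l. l \<in> {1..r} \<Longrightarrow> ell_fac (c l) q p (m l) * ell_fac (c l / a) q p (m l) \<noteq> 0"
  shows "((\<lambda>t. vwp_closed_form p q r n c m (A t) (B t)) \<longlongrightarrow> vwp_closed_form p q r n c m a b) F"
  unfolding vwp_closed_form_def using assms
  by (intro tendsto_intros tendsto_prod ballI) auto

lemma eventually_ell_fac_nonzero:
  assumes "(f \<longlongrightarrow> x) F" "x \<noteq> 0" "q \<noteq> 0" "ell_fac x q p k \<noteq> 0"
  shows "eventually (\<lambda>t. ell_fac (f t) q p k \<noteq> 0) F"
  using tendsto_imp_eventually_ne[OF tendsto_ell_fac[OF assms(1-3)] assms(4)] .

text \<open>Moving \<open>(a, b)\<close> to \<open>(a(1+t), b/(1+t))\<close> moves \<open>a\<close>, \<open>b\<close> and \<open>a/b\<close> simultaneously, so the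
  extra non-vanishing conditions hold for all small \<open>t \<noteq> 0\<close>.\<close>
lemma eventually_vwp_generic:
  assumes q: "q \<noteq> 0" and a: "a \<noteq> 0" and b: "b \<noteq> 0" and c: "\<And>l. l \<in> {1..r} \<Longrightarrow> c l \<noteq> 0"
    and n: "n = (\<Sum>l\<in>{1..r}. m l)"
    and den_q: "ell_fac q q p n \<noteq> 0"
    and den_c: "\<And>j l. j \<le> n \<Longrightarrow> l \<in> {1..r} \<Longrightarrow>
       ell_fac (c l) q p j * ell_fac (a * q powi (1 - int (m l)) / c l) q p j \<noteq> 0"
    and den_c_a: "\<And>l. l \<in> {1..r} \<Longrightarrow> ell_fac (c l / a) q p (m l) \<noteq> 0"
  shows "eventually (\<lambda>t. vwp_generic p q (a * (1 + t)) (b / (1 + t)) r n c m) (at 0)"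
proof -
  have lim_a: "((\<lambda>t. a * (1 + t)) \<longlongrightarrow> a) (at 0)" by (auto intro!: tendsto_eq_intros)
  have theta_q: "theta (q ^ d) p \<noteq> 0" if "1 \<le> d" "d \<le> n" for d
  proof -
    have "theta (q * q ^ (d - 1)) p \<noteq> 0" using den_q that by (auto simp: ell_fac_eq_0_iff)
    then show ?thesis using that by (simp add: power_eq_if)
  qed
  have m_le: "m l \<le> n" if "l \<in> {1..r}" for l
    unfolding n using that by (intro member_le_sum) auto
  have "eventually (\<lambda>t. t \<noteq> -1) (at (0::complex))"
    unfolding eventually_at by (intro exI[of _ 1]) (auto simp: dist_norm)
  moreover have "eventually (\<lambda>t. \<forall>s\<in>{..2 * n}. theta (a * (1 + t) * q ^ s) p \<noteq> 0) (at 0)"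
    using eventually_theta_perturbed_nonzero(1)[of "a * q ^ _"] a q
    by (intro eventually_ball_finite) (auto simp: ac_simps)
  moreover have "eventually (\<lambda>t. \<forall>j\<in>{..n}. theta (b / (1 + t) * q ^ j) p \<noteq> 0) (at 0)"
    using eventually_theta_perturbed_nonzero(2)[of "b * q ^ _"] b q
    by (intro eventually_ball_finite) (auto simp: ac_simps)
  moreover have "eventually (\<lambda>t. \<forall>j\<in>{..n}.
      theta (a * (1 + t) * q ^ j / (b / (1 + t))) p \<noteq> 0) (at 0)"
    using eventually_theta_perturbed_nonzero(3)[of "a * q ^ _ / b"] a b q
    by (intro eventually_ball_finite) (auto simp: power2_eq_square ac_simps)
  moreover have "eventually (\<lambda>t. \<forall>j\<in>{..n}. \<forall>l\<in>{1..r}.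
      ell_fac (a * (1 + t) * q powi (1 - int (m l)) / c l) q p j \<noteq> 0) (at 0)"
  proof (intro eventually_ball_finite ballI)
    fix j l assume "j \<in> {..n}" "l \<in> {1..r}"
    then show "eventually (\<lambda>t. ell_fac (a * (1 + t) * q powi (1 - int (m l)) / c l) q p j \<noteq> 0) (at 0)"
      using den_c[of j l] c[of l] a q
      by (intro eventually_ell_fac_nonzero[where x = "a * q powi (1 - int (m l)) / c l"]
          tendsto_intros lim_a) auto
  qed auto
  moreover have "eventually (\<lambda>t. \<forall>l\<in>{1..r}. ell_fac (c l / (a * (1 + t))) q p (m l) \<noteq> 0) (at 0)"
  proof (intro eventually_ball_finite ballI)
    fix l assume "l \<in> {1..r}"
    then show "eventually (\<lambda>t. ell_fac (c l / (a * (1 + t))) q p (m l) \<noteq> 0) (at 0)"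
      using den_c_a[of l] c[of l] a q
      by (intro eventually_ell_fac_nonzero[where x = "c l / a"] tendsto_intros lim_a) auto
  qed auto
  ultimately show ?thesis
  proof eventually_elim
    case (elim t)
    show ?case
    proof unfold_locales
      show "a * (1 + t) \<noteq> 0" "b / (1 + t) \<noteq> 0" using elim(1) a b by (auto simp: add_eq_0_iff)
      show "\<And>s. s \<le> 2 * n \<Longrightarrow> theta (a * (1 + t) * q ^ s) p \<noteq> 0"
        "\<And>j. j \<le> n \<Longrightarrow> theta (b / (1 + t) * q ^ j) p \<noteq> 0
           \<and> theta (a * (1 + t) * q ^ j / (b / (1 + t))) p \<noteq> 0"
        using elim(2-4) by auto
      show "\<And>l. l \<in> {1..r} \<Longrightarrow> ell_fac (c l) q p (m l) \<noteq> 0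
          \<and> ell_fac (a * (1 + t) * q powi (1 - int (m l)) / c l) q p (m l) \<noteq> 0
          \<and> ell_fac (c l / (a * (1 + t))) q p (m l) \<noteq> 0"
        using elim(5,6) den_c m_le by fastforce
      show "\<And>j l. j \<le> n \<Longrightarrow> l \<in> {1..r} \<Longrightarrow> ell_fac (c l) q p j \<noteq> 0
          \<and> ell_fac (a * (1 + t) * q powi (1 - int (m l)) / c l) q p j \<noteq> 0"
        using elim(5) den_c by fastforce
    qed (fact norm_nome_pos norm_nome_less_1 q c n theta_q)+
  qed
qed

end

theorem proposition2p5:
  fixes p q a b :: complex and r n :: nat and c :: "nat \<Rightarrow> complex" and m :: "nat \<Rightarrow> nat"
  assumes hp: "0 < norm p" "norm p < 1"
    and hnz: "a \<noteq> 0" "b \<noteq> 0" "q \<noteq> 0" "\<And>l. l \<in> {1..r} \<Longrightarrow> c l \<noteq> 0"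
    and hn: "n = (\<Sum>l\<in>{1..r}. m l)"
    and den1: "theta a p \<noteq> 0"
    and den2: "\<And>j. j \<le> n \<Longrightarrow>
       ell_fac q q p j * ell_fac (a * q / b) q p j * ell_fac (b * q) q p j
         * ell_fac (a * q ^ (n + 1)) q p j \<noteq> 0"
    and den3: "\<And>j l. j \<le> n \<Longrightarrow> l \<in> {1..r} \<Longrightarrow>
       ell_fac (c l) q p j * ell_fac (a * q powi (1 - int (m l)) / c l) q p j \<noteq> 0"
    and den4: "ell_fac (a * q / b) q p n * ell_fac (b * q) q p n \<noteq> 0"
    and den5: "\<And>l. l \<in> {1..r} \<Longrightarrow> ell_fac (c l) q p (m l) * ell_fac (c l / a) q p (m l) \<noteq> 0"
  shows "(\<Sum>j\<le>n. theta (a * q ^ (2 * j)) p / theta a p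
            * (ell_fac a q p j * ell_fac b q p j * ell_fac (a / b) q p j
               * ell_fac (q powi (- int n)) q p j)
            / (ell_fac q q p j * ell_fac (a * q / b) q p j * ell_fac (b * q) q p j
               * ell_fac (a * q ^ (n + 1)) q p j)
            * q ^ j
            * (\<Prod>l\<in>{1..r}. (ell_fac (c l * q ^ m l) q p j * ell_fac (a * q / c l) q p j)
                 / (ell_fac (c l) q p j * ell_fac (a * q powi (1 - int (m l)) / c l) q p j)))
       = (ell_fac q q p n * ell_fac (a * q) q p n) / (ell_fac (a * q / b) q p n * ell_fac (b * q) q p n)
         * (\<Prod>l\<in>{1..r}. (ell_fac (c l / b) q p (m l) * ell_fac (b * c l / a) q p (m l))
                 / (ell_fac (c l) q p (m l) * ell_fac (c l / a) q p (m l)))"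
proof -
  interpret theta_nome p using hp by unfold_locales
  define A where "A t = a * (1 + t)" for t :: complex
  define B where "B t = b / (1 + t)" for t :: complex
  have lim_A: "(A \<longlongrightarrow> a) (at 0)" and lim_B: "(B \<longlongrightarrow> b) (at 0)"
    unfolding A_def B_def by (auto intro!: tendsto_eq_intros)
  have "eventually (\<lambda>t. vwp_generic p q (A t) (B t) r n c m) (at 0)"
    unfolding A_def B_def
    by (rule eventually_vwp_generic) (use hnz hn den2[of n] den3 den5 in auto)
  then have "eventually (\<lambda>t. vwp_closed_form p q r n c m (A t) (B t)
      = (\<Sum>j\<le>n. vwp_term p q r n c m (A t) (B t) j)) (at 0)"
    by eventually_elim (rule vwp_generic.vwp_sum_eq_closed_form[symmetric])
  with tendsto_vwp_closed_form[OF lim_A lim_B]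
  have "((\<lambda>t. \<Sum>j\<le>n. vwp_term p q r n c m (A t) (B t) j)
      \<longlongrightarrow> vwp_closed_form p q r n c m a b) (at 0)"
    by (rule Lim_transform_eventually) (use hnz den4 den5 in auto)
  moreover have "((\<lambda>t. \<Sum>j\<le>n. vwp_term p q r n c m (A t) (B t) j)
      \<longlongrightarrow> (\<Sum>j\<le>n. vwp_term p q r n c m a b j)) (at 0)"
    by (intro tendsto_sum tendsto_vwp_term[OF lim_A lim_B]) (use hnz den1 den2 den3 in auto)
  ultimately have "(\<Sum>j\<le>n. vwp_term p q r n c m a b j) = vwp_closed_form p q r n c m a b"
    using tendsto_unique[OF at_neq_bot] by blast
  then show ?thesis
    unfolding vwp_term_def vwp_closed_form_def .
qed

end
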